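(* Let $A$ be a commutative noetherian ring containing a field $k$ with $1/2\in k$, and let $P$ be a projective $A$-module. The obstruction class map $\chi:\mathcal{LO}(P)\to\pi_0(\mathcal{Q}(P))$ induces a well-defined map $\overline{\chi}:\pi_0(\mathcal{LO}(P))\to\pi_0(\mathcal{Q}(P))$, and $\overline\chi$ is a bijection. Its inverse is the map $\overline{\eta}':\pi_0(\mathcal{Q}(P))\to\pi_0(\mathcal{LO}(P))$ induced by $\eta'$. Consequently the induced maps $\overline\eta:\pi_0(\widetilde Q(P))\to\pi_0(\mathcal{LO}(P))$, $\overline{\eta}'$, $\overline\nu:\pi_0(\widetilde Q(P))\to\pi_0(\mathcal{Q}(P))$ and $\overline\kappa:\pi_0(\widetilde Q(P))\to\pi_0(\widetilde Q'(P))$ are all bijections.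
   Context: $P^*=\mathrm{Hom}_A(P,A)$ and $P[T]=P\otimes_AA[T]$. Sets. Define $\widetilde Q(P)=\{(f,p,s)\in P^*\oplus P\oplus A: f(p)+s(s-1)=0\}$, $\widetilde Q'(P)=\{(f,p,z): f(p)+z^2=1\}$, $\mathcal{Q}(P)=\{(f,s)\in P^*\oplus A: s(1-s)\in f(P)\}$. A local $P$-orientation is a pair $(I,\omega)$, $I$ an ideal and $\omega:P\to I/I^2$ surjective; $\mathcal{LO}(P)$ is their set. All of these are defined likewise over $A[T]$ for $P[T]$. Homotopy sets. For $\mathcal{F}=\widetilde Q,\widetilde Q',\mathcal{Q}$, $\pi_0(\mathcal{F}(P))$ is the quotient of $\mathcal{F}(P)$ by the equivalence relation generated by $H(0)\sim H(1)$ for $H(T)\in\mathcal{F}(P[T])$, with $H(t)$ the specialization $T=t$. $\pi_0(\mathcal{LO}(P))$ is the quotient of $\mathcal{LO}(P)$ by the equivalence relation generated by $(J(0),\Omega(0))\sim(J(1),\Omega(1))$ for $(J,\Omega)\in\mathcal{LO}(P[T])$, where $J(t)$ is the image of $J$ under $T\mapsto t$ and $\Omega(t)$ is the induced map. Maps. - $\nu(f,p,s)=(f,s)$. - $\eta(f,p,s)=\eta'(f,s)=(f(P)+As,\omega)$, with $\omega$ induced by $f$. - $\kappa(f,p,s)=(2f,2p,2s-1)$, a bijection $\widetilde Q(P)\to\widetilde Q'(P)$. All of these are compatible with homotopy and induce the barred maps. - $\chi(I,\omega)$ is the class $[(f,s)]$ of any $(f,s)\in\mathcal{Q}(P)$ such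 that $f:P\to I$ lifts $\omega$, $s\in I$, and $I=f(P)+As$. Such pairs exist, and this class is independent of the choice. *)

theory Defs
  imports "HOL-Computational_Algebra.Polynomial"
begin

section \<open>Ring-theoretic notions (the ring is the whole type 'a)\<close>

definition is_ideal :: "'a::comm_ring_1 set \<Rightarrow> bool" where
  "is_ideal I \<longleftrightarrow> 0 \<in> I \<and> (\<forall>x\<in>I. \<forall>y\<in>I. x + y \<in> I) \<and> (\<forall>a. \<forall>x\<in>I. a * x \<in> I)"

definition ideal_gen :: "'a::comm_ring_1 set \<Rightarrow> 'a set" where
  "ideal_gen F = {(\<Sum>x\<in>F. c x * x) | c. True}"

definition noetherian_ring :: "'a::comm_ring_1 itself \<Rightarrow> bool" where
  "noetherian_ring (t::'a itself) \<longleftrightarrow> (\<forall>I::'a set. is_ideal I \<longrightarrow> (\<exists>F. finite F \<and> F \<subseteq> I \<and> I = ideal_gen F))"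

definition is_subfield :: "'a::comm_ring_1 set \<Rightarrow> bool" where
  "is_subfield k \<longleftrightarrow> 0 \<in> k \<and> 1 \<in> k \<and> (0::'a) \<noteq> 1 \<and>
     (\<forall>x\<in>k. \<forall>y\<in>k. x + y \<in> k \<and> x * y \<in> k) \<and> (\<forall>x\<in>k. - x \<in> k) \<and>
     (\<forall>x\<in>k. x \<noteq> 0 \<longrightarrow> (\<exists>y\<in>k. x * y = 1))"

definition contains_field_with_half :: "'a::comm_ring_1 itself \<Rightarrow> bool" where
  "contains_field_with_half (t::'a itself) \<longleftrightarrow> (\<exists>k::'a set. is_subfield k \<and> (\<exists>h\<in>k. 2 * h = 1))"

definition ideal_sq :: "'a::comm_ring_1 set \<Rightarrow> 'a set" where
  "ideal_sq I = {(\<Sum>i<n. x i * y i) | (n::nat) x y. \<forall>i<n. x i \<in> I \<and> y i \<in> I}"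

text \<open>Elements of I/I^2, represented as cosets x + I^2 with x in I.\<close>
definition quot_sq :: "'a::comm_ring_1 set \<Rightarrow> 'a set set" where
  "quot_sq I = {(+) x ` ideal_sq I | x. x \<in> I}"

section \<open>Modules (the module is the whole type 'm with scalar action sc)\<close>

definition dual :: "('r::comm_ring_1 \<Rightarrow> 'm::ab_group_add \<Rightarrow> 'm) \<Rightarrow> ('m \<Rightarrow> 'r) set" where
  "dual sc = {f. module_hom sc (*) f}"

text \<open>Projective module, via the dual basis characterisation (indexed by elements of P).\<close>
definition projective_module :: "('r::comm_ring_1 \<Rightarrow> 'm::ab_group_add \<Rightarrow> 'm) \<Rightarrow> bool" where
  "projective_module sc \<longleftrightarrow> module sc \<and>
     (\<exists>\<phi> :: 'm \<Rightarrow> 'm \<Rightarrow> 'r. (\<forall>x. \<phi> x \<in> dual sc) \<and>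
        (\<forall>p. finite {x. \<phi> x p \<noteq> 0} \<and> p = (\<Sum>x\<in>{x. \<phi> x p \<noteq> 0}. sc (\<phi> x p) x)))"

definition Qt :: "('r::comm_ring_1 \<Rightarrow> 'm::ab_group_add \<Rightarrow> 'm) \<Rightarrow> (('m \<Rightarrow> 'r) \<times> 'm \<times> 'r) set" where
  "Qt sc = {(f, p, s). f \<in> dual sc \<and> f p + s * (s - 1) = 0}"

definition Qt' :: "('r::comm_ring_1 \<Rightarrow> 'm::ab_group_add \<Rightarrow> 'm) \<Rightarrow> (('m \<Rightarrow> 'r) \<times> 'm \<times> 'r) set" where
  "Qt' sc = {(f, p, z). f \<in> dual sc \<and> f p + z\<^sup>2 = 1}"

definition Qs :: "('r::comm_ring_1 \<Rightarrow> 'm::ab_group_add \<Rightarrow> 'm) \<Rightarrow> (('m \<Rightarrow> 'r) \<times> 'r) set" where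
  "Qs sc = {(f, s). f \<in> dual sc \<and> s * (1 - s) \<in> range f}"

text \<open>Local orientations (I, omega): omega maps p to an element (coset) of I/I^2,
  is linear (checked on representatives) and surjective.\<close>
definition LO :: "('r::comm_ring_1 \<Rightarrow> 'm::ab_group_add \<Rightarrow> 'm) \<Rightarrow> ('r set \<times> ('m \<Rightarrow> 'r set)) set" where
  "LO sc = {(I, \<omega>). is_ideal I \<and> (\<forall>p. \<omega> p \<in> quot_sq I) \<and>
      (\<forall>p q x y. x \<in> \<omega> p \<longrightarrow> y \<in> \<omega> q \<longrightarrow> x + y \<in> \<omega> (p + q)) \<and>
      (\<forall>a p x. x \<in> \<omega> p \<longrightarrow> a * x \<in> \<omega> (sc a p)) \<and>
      (\<forall>x\<in>I. \<exists>p. x \<in> \<omega> p)}"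

definition nu :: "('m \<Rightarrow> 'r) \<times> 'm \<times> 'r \<Rightarrow> ('m \<Rightarrow> 'r) \<times> 'r" where
  "nu = (\<lambda>(f, p, s). (f, s))"

definition eta' :: "('m \<Rightarrow> 'r::comm_ring_1) \<times> 'r \<Rightarrow> 'r set \<times> ('m \<Rightarrow> 'r set)" where
  "eta' = (\<lambda>(f, s). let I = {f q + a * s | q a. True} in (I, \<lambda>p. (+) (f p) ` ideal_sq I))"

definition eta :: "('m \<Rightarrow> 'r::comm_ring_1) \<times> 'm \<times> 'r \<Rightarrow> 'r set \<times> ('m \<Rightarrow> 'r set)" where
  "eta x = eta' (nu x)"

definition kappa :: "('r::comm_ring_1 \<Rightarrow> 'm \<Rightarrow> 'm) \<Rightarrow> ('m \<Rightarrow> 'r) \<times> 'm \<times> 'r \<Rightarrow> ('m \<Rightarrow> 'r) \<times> 'm \<times> 'r" where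
  "kappa sc = (\<lambda>(f, p, s). (\<lambda>q. 2 * f q, sc 2 p, 2 * s - 1))"

text \<open>(f,s) is an admissible choice for chi(I,omega).\<close>
definition chi_wit :: "('r::comm_ring_1 \<Rightarrow> 'm::ab_group_add \<Rightarrow> 'm) \<Rightarrow> 'r set \<times> ('m \<Rightarrow> 'r set) \<Rightarrow> ('m \<Rightarrow> 'r) \<times> 'r \<Rightarrow> bool" where
  "chi_wit sc = (\<lambda>(I, \<omega>) (f, s). (f, s) \<in> Qs sc \<and> (\<forall>p. f p \<in> I \<and> f p \<in> \<omega> p) \<and> s \<in> I \<and>
      I = {f q + a * s | q a. True})"

section \<open>Polynomial extension: A[T] = 'a poly, P[T] = 'b poly\<close>

definition pscale :: "('a::comm_ring_1 \<Rightarrow> 'b::ab_group_add \<Rightarrow> 'b) \<Rightarrow> 'a poly \<Rightarrow> 'b poly \<Rightarrow> 'b poly" where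
  "pscale sc a p = (\<Sum>i\<le>degree a. \<Sum>j\<le>degree p. monom (sc (coeff a i) (coeff p j)) (i + j))"

definition peval :: "('a::comm_ring_1 \<Rightarrow> 'b::ab_group_add \<Rightarrow> 'b) \<Rightarrow> 'a \<Rightarrow> 'b poly \<Rightarrow> 'b" where
  "peval sc t p = (\<Sum>i\<le>degree p. sc (t ^ i) (coeff p i))"

definition spec_dual :: "'a::comm_ring_1 \<Rightarrow> ('b::zero poly \<Rightarrow> 'a poly) \<Rightarrow> ('b \<Rightarrow> 'a)" where
  "spec_dual t F = (\<lambda>q. poly (F [:q:]) t)"

definition spec_Qt :: "('a::comm_ring_1 \<Rightarrow> 'b::ab_group_add \<Rightarrow> 'b) \<Rightarrow> 'a \<Rightarrow>
    ('b poly \<Rightarrow> 'a poly) \<times> 'b poly \<times> 'a poly \<Rightarrow> ('b \<Rightarrow> 'a) \<times> 'b \<times> 'a" where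
  "spec_Qt sc t = (\<lambda>(F, p, s). (spec_dual t F, peval sc t p, poly s t))"

definition spec_Qs :: "'a::comm_ring_1 \<Rightarrow> ('b::zero poly \<Rightarrow> 'a poly) \<times> 'a poly \<Rightarrow> ('b \<Rightarrow> 'a) \<times> 'a" where
  "spec_Qs t = (\<lambda>(F, s). (spec_dual t F, poly s t))"

definition spec_LO :: "'a::comm_ring_1 \<Rightarrow> 'a poly set \<times> ('b::zero poly \<Rightarrow> 'a poly set) \<Rightarrow> 'a set \<times> ('b \<Rightarrow> 'a set)" where
  "spec_LO t = (\<lambda>(J, \<Omega>). let Jt = (\<lambda>f. poly f t) ` J in
      (Jt, \<lambda>q. {poly f t + y | f y. f \<in> \<Omega> [:q:] \<and> y \<in> ideal_sq Jt}))"

definition htpy_rel :: "'x set \<Rightarrow> 'h set \<Rightarrow> ('h \<Rightarrow> 'x) \<Rightarrow> ('h \<Rightarrow> 'x) \<Rightarrow> ('x \<times> 'x) set" where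
  "htpy_rel X XT ev0 ev1 = {(x, y). x \<in> X \<and> y \<in> X \<and>
      equivclp (\<lambda>u v. u \<in> X \<and> v \<in> X \<and> (\<exists>H\<in>XT. ev0 H = u \<and> ev1 H = v)) x y}"

definition Qt_rel where
  "Qt_rel sc = htpy_rel (Qt sc) (Qt (pscale sc)) (spec_Qt sc 0) (spec_Qt sc 1)"
definition Qt'_rel where
  "Qt'_rel sc = htpy_rel (Qt' sc) (Qt' (pscale sc)) (spec_Qt sc 0) (spec_Qt sc 1)"
definition Qs_rel where
  "Qs_rel sc = htpy_rel (Qs sc) (Qs (pscale sc)) (spec_Qs 0) (spec_Qs 1)"
definition LO_rel where
  "LO_rel sc = htpy_rel (LO sc) (LO (pscale sc)) (spec_LO 0) (spec_LO 1)"

definition pi0_Qt where "pi0_Qt sc = Qt sc // Qt_rel sc"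
definition pi0_Qt' where "pi0_Qt' sc = Qt' sc // Qt'_rel sc"
definition pi0_Qs where "pi0_Qs sc = Qs sc // Qs_rel sc"
definition pi0_LO where "pi0_LO sc = LO sc // LO_rel sc"

definition compat :: "('x \<times> 'x) set \<Rightarrow> ('y \<times> 'y) set \<Rightarrow> ('x \<Rightarrow> 'y) \<Rightarrow> bool" where
  "compat R S f \<longleftrightarrow> (\<forall>x y. (x, y) \<in> R \<longrightarrow> (f x, f y) \<in> S)"

definition induced :: "('y \<times> 'y) set \<Rightarrow> ('x \<Rightarrow> 'y) \<Rightarrow> 'x set \<Rightarrow> 'y set" where
  "induced S f C = (\<Union>x\<in>C. S `` {f x})"

definition chibar where
  "chibar sc D = \<Union>{Qs_rel sc `` {a} | x a. x \<in> D \<and> chi_wit sc x a}"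

end

theory Submission
  imports Defs
begin

text \<open>
  A local orientation \<open>\<omega> : P \<rightarrow> I/I\<^sup>2\<close> lifts to a linear form \<open>f\<close> since \<open>P\<close> is projective, so
  \<open>I = f(P) + I\<^sup>2\<close>; as \<open>I\<close> is finitely generated, Nakayama's lemma yields \<open>s \<in> I\<close> with
  \<open>(1 - s) I \<subseteq> f(P)\<close>, i.e. \<open>I = f(P) + A s\<close> and \<open>s (1 - s) \<in> f(P)\<close>: this is the witness \<open>(f, s)\<close>
  defining \<open>\<chi>\<close>. For two lifts \<open>f, g\<close> the same argument applied to \<open>f + T (g - f)\<close> and
  \<open>I[T]\<close> gives a homotopy between witnesses for \<open>f\<close> and for \<open>g\<close>, and witnesses with the same \<open>f\<close>
  differ by an element of \<open>f(P)\<close>, hence are joined by a linear homotopy. Because \<open>A[T]\<close> is again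
  noetherian (Hilbert) and \<open>P[T]\<close> projective, a homotopy of local orientations has a witness over
  \<open>A[T]\<close>, so \<open>\<chi>\<close> respects homotopy. Conversely \<open>\<eta>'\<close> recovers \<open>(I, \<omega>)\<close> from any of its
  witnesses, so \<open>\<eta>'\<close> inverts \<open>\<chi>\<close> on homotopy classes. Finally \<open>\<nu>\<close> has the section choosing
  any \<open>p\<close> with \<open>f(p) = s (1 - s)\<close>, which is unique up to a linear homotopy in \<open>p\<close>,
  \<open>\<kappa>\<close> is inverted using \<open>1/2\<close>, and \<open>\<eta> = \<eta>' \<circ> \<nu>\<close>.
\<close>

section \<open>Ideals and Nakayama's lemma\<close>

lemma ideal_0: "is_ideal I \<Longrightarrow> 0 \<in> I"
  by (simp add: is_ideal_def)

lemma ideal_add: "is_ideal I \<Longrightarrow> x \<in> I \<Longrightarrow> y \<in> I \<Longrightarrow> x + y \<in> I"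
  by (simp add: is_ideal_def)

lemma ideal_mult_left: "is_ideal I \<Longrightarrow> x \<in> I \<Longrightarrow> a * x \<in> I"
  by (simp add: is_ideal_def)

lemma ideal_mult_right: "is_ideal I \<Longrightarrow> x \<in> I \<Longrightarrow> x * a \<in> I"
  by (metis ideal_mult_left mult.commute)

lemma ideal_diff: "is_ideal I \<Longrightarrow> x \<in> I \<Longrightarrow> y \<in> I \<Longrightarrow> x - y \<in> I"
  using ideal_add[of I x "-1 * y"] ideal_mult_left[of I y "-1"] by simp

lemma ideal_sum: "is_ideal I \<Longrightarrow> (\<And>i. i \<in> S \<Longrightarrow> f i \<in> I) \<Longrightarrow> sum f S \<in> I"
  by (induction S rule: infinite_finite_induct) (simp_all add: ideal_0 ideal_add)

lemma ideal_sq_iff: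
  "u \<in> ideal_sq I \<longleftrightarrow> (\<exists>(n::nat) x y. u = (\<Sum>i<n. x i * y i) \<and> (\<forall>i<n. x i \<in> I \<and> y i \<in> I))"
  unfolding ideal_sq_def by blast

lemma ideal_gen_iff: "x \<in> ideal_gen F \<longleftrightarrow> (\<exists>c. x = (\<Sum>h\<in>F. c h * h))"
  unfolding ideal_gen_def by blast

lemma ideal_sq_mult: "x \<in> I \<Longrightarrow> y \<in> I \<Longrightarrow> x * y \<in> ideal_sq I"
  unfolding ideal_sq_iff by (rule exI[of _ 1]) auto

lemma ideal_sq_0: "0 \<in> ideal_sq I"
  unfolding ideal_sq_iff by (rule exI[of _ 0]) auto

lemma ideal_sq_add:
  assumes "u \<in> ideal_sq I" "v \<in> ideal_sq I"
  shows "u + v \<in> ideal_sq I"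
proof -
  obtain n :: nat and x y where u: "u = (\<Sum>i<n. x i * y i)" "\<forall>i<n. x i \<in> I \<and> y i \<in> I"
    using assms(1) unfolding ideal_sq_iff by blast
  obtain m :: nat and x' y' where v: "v = (\<Sum>i<m. x' i * y' i)" "\<forall>i<m. x' i \<in> I \<and> y' i \<in> I"
    using assms(2) unfolding ideal_sq_iff by blast
  define X where "X i = (if i < n then x i else x' (i - n))" for i
  define Y where "Y i = (if i < n then y i else y' (i - n))" for i
  have split: "sum g {..<n+m} = sum g {..<n} + (\<Sum>i<m. g (n+i))" for g :: "nat \<Rightarrow> 'a"
    by (induction m) (auto simp: add.assoc)
  have "(\<Sum>i<n+m. X i * Y i) = u + v"
    unfolding split u v X_def Y_def by simp
  moreover have "\<forall>i<n+m. X i \<in> I \<and> Y i \<in> I"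
    using u v by (auto simp: X_def Y_def)
  ultimately show ?thesis
    unfolding ideal_sq_iff by (intro exI[of _ "n+m"] exI[of _ X] exI[of _ Y]) auto
qed

lemma ideal_sq_mult_left:
  assumes "is_ideal I" "u \<in> ideal_sq I"
  shows "a * u \<in> ideal_sq I"
proof -
  obtain n :: nat and x y where u: "u = (\<Sum>i<n. x i * y i)" "\<forall>i<n. x i \<in> I \<and> y i \<in> I"
    using assms(2) unfolding ideal_sq_iff by blast
  have "a * u = (\<Sum>i<n. (a * x i) * y i)"
    by (simp add: u sum_distrib_left mult.assoc)
  moreover have "\<forall>i<n. a * x i \<in> I \<and> y i \<in> I"
    using u assms(1) by (auto simp: ideal_mult_left)
  ultimately show ?thesis
    unfolding ideal_sq_iff by (intro exI[of _ n] exI[of _ "\<lambda>i. a * x i"] exI[of _ y]) auto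
qed

lemma is_ideal_ideal_sq: "is_ideal I \<Longrightarrow> is_ideal (ideal_sq I)"
  unfolding is_ideal_def[of "ideal_sq I"] by (auto simp: ideal_sq_0 ideal_sq_add ideal_sq_mult_left)

lemma ideal_sq_subset: "is_ideal I \<Longrightarrow> ideal_sq I \<subseteq> I"
  unfolding ideal_sq_def by (auto intro!: ideal_sum ideal_mult_left)

lemma is_ideal_ideal_gen: "is_ideal (ideal_gen F)"
  unfolding is_ideal_def
proof (intro conjI ballI allI)
  show "0 \<in> ideal_gen F"
    unfolding ideal_gen_iff by (rule exI[of _ "\<lambda>_. 0"]) simp
  show "x + y \<in> ideal_gen F" if "x \<in> ideal_gen F" "y \<in> ideal_gen F" for x y
  proof -
    obtain c d where "x = (\<Sum>h\<in>F. c h * h)" "y = (\<Sum>h\<in>F. d h * h)"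
      using \<open>x \<in> ideal_gen F\<close> \<open>y \<in> ideal_gen F\<close> unfolding ideal_gen_iff by blast
    then show ?thesis
      unfolding ideal_gen_iff
      by (intro exI[of _ "\<lambda>h. c h + d h"]) (simp add: sum.distrib distrib_right)
  qed
  show "a * x \<in> ideal_gen F" if "x \<in> ideal_gen F" for a x
  proof -
    obtain c where "x = (\<Sum>h\<in>F. c h * h)"
      using \<open>x \<in> ideal_gen F\<close> unfolding ideal_gen_iff by blast
    then show ?thesis
      unfolding ideal_gen_iff
      by (intro exI[of _ "\<lambda>h. a * c h"]) (simp add: sum_distrib_left mult.assoc)
  qed
qed

lemma ideal_gen_base: "finite F \<Longrightarrow> x \<in> F \<Longrightarrow> x \<in> ideal_gen F"
  unfolding ideal_gen_iff
  by (rule exI[of _ "\<lambda>h. if h = x then 1 else 0"])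
     (simp add: if_distrib[of "\<lambda>c. c * _"] sum.delta cong: if_cong)

lemma ideal_gen_least: "is_ideal I \<Longrightarrow> F \<subseteq> I \<Longrightarrow> ideal_gen F \<subseteq> I"
  unfolding ideal_gen_def by (auto intro!: ideal_sum ideal_mult_left)

lemma noetherian_ring_finitely_generated:
  "noetherian_ring TYPE('a::comm_ring_1) \<Longrightarrow> is_ideal (I::'a set) \<Longrightarrow>
     \<exists>F. finite F \<and> F \<subseteq> I \<and> I = ideal_gen F"
  unfolding noetherian_ring_def by blast

lemma nakayama_sq:
  assumes J: "is_ideal J" and K: "is_ideal K"
    and e: "\<forall>y\<in>J. \<exists>c. e * y - (\<Sum>h\<in>G. c h * h) \<in> K"
    and v: "v \<in> ideal_sq J"
  shows "\<exists>a. (\<forall>h. a h \<in> J) \<and> e * v - (\<Sum>h\<in>G. a h * h) \<in> K"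
proof -
  obtain n :: nat and x y where v': "v = (\<Sum>i<n. x i * y i)" "\<forall>i<n. x i \<in> J \<and> y i \<in> J"
    using v unfolding ideal_sq_iff by blast
  have "\<exists>a. (\<forall>h. a h \<in> J) \<and> e * (\<Sum>i<m. x i * y i) - (\<Sum>h\<in>G. a h * h) \<in> K" if "m \<le> n" for m
    using that
  proof (induction m)
    case 0
    then show ?case by (auto intro!: exI[of _ "\<lambda>_. 0"] simp: ideal_0 J K)
  next
    case (Suc m)
    then obtain a where a: "\<forall>h. a h \<in> J" "e * (\<Sum>i<m. x i * y i) - (\<Sum>h\<in>G. a h * h) \<in> K"
      by auto
    from Suc.prems v' have xy: "x m \<in> J" "y m \<in> J" by auto
    obtain c where c: "e * y m - (\<Sum>h\<in>G. c h * h) \<in> K"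
      using e xy by blast
    define a' where "a' h = a h + x m * c h" for h
    have "e * (\<Sum>i<Suc m. x i * y i) - (\<Sum>h\<in>G. a' h * h)
       = (e * (\<Sum>i<m. x i * y i) - (\<Sum>h\<in>G. a h * h)) + x m * (e * y m - (\<Sum>h\<in>G. c h * h))"
      by (simp add: a'_def algebra_simps sum.distrib sum_distrib_left)
    also have "\<dots> \<in> K"
      using a(2) c K by (simp add: ideal_add ideal_mult_left)
    finally show ?case
      using a(1) xy J by (auto simp: a'_def intro!: exI[of _ a'] ideal_add ideal_mult_right)
  qed
  then show ?thesis using v'(1) by blast
qed

text \<open>Writing \<open>e g\<close> as an element of \<open>K + J\<^sup>2\<close> and expanding the \<open>J\<^sup>2\<close> part along the generators
  expresses \<open>(e\<^sup>2 - a) g\<close> through \<open>G\<close> alone; the new multiplier \<open>(e\<^sup>2 - a) e\<close> therefore no longer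
  needs \<open>g\<close>.\<close>
lemma nakayama_drop_generator:
  assumes J: "is_ideal J" and K: "is_ideal K"
    and cov: "\<forall>y\<in>J. \<exists>k\<in>K. \<exists>v\<in>ideal_sq J. y = k + v"
    and G: "finite G" "g \<notin> G" "g \<in> J"
    and e: "1 - e \<in> J" "\<forall>y\<in>J. \<exists>c. e * y - (\<Sum>h\<in>insert g G. c h * h) \<in> K"
  shows "\<exists>e'. 1 - e' \<in> J \<and> (\<forall>y\<in>J. \<exists>c. e' * y - (\<Sum>h\<in>G. c h * h) \<in> K)"
proof -
  have "e * g \<in> J" using G(3) J by (simp add: ideal_mult_left)
  then obtain k0 v where k0: "k0 \<in> K" "v \<in> ideal_sq J" "e * g = k0 + v"
    using cov by blast
  obtain a where a: "\<forall>h. a h \<in> J" "e * v - (\<Sum>h\<in>insert g G. a h * h) \<in> K"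
    using nakayama_sq[OF J K e(2) k0(2)] by blast
  define k where "k = e * v - (\<Sum>h\<in>insert g G. a h * h)"
  define b where "b = e * e - a g"
  have bg: "b * g = (\<Sum>h\<in>G. a h * h) + (e * k0 + k)"
  proof -
    have "b * g = e * e * g - a g * g" by (simp add: b_def left_diff_distrib)
    also have "e * e * g = e * k0 + e * v" by (simp add: mult.assoc k0(3) distrib_left)
    also have "e * v = a g * g + (\<Sum>h\<in>G. a h * h) + k" using G by (simp add: k_def)
    finally show ?thesis by (simp add: algebra_simps)
  qed
  have ek: "e * k0 + k \<in> K"
    using a(2) k0 K by (simp add: k_def ideal_add ideal_mult_left)
  have "1 - b * e \<in> J"
  proof -
    have "1 - b * e = (1 - e) * (1 + e + e * e) + a g * e" by (simp add: b_def algebra_simps)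
    then show ?thesis using e(1) a(1) J by (simp add: ideal_add ideal_mult_left ideal_mult_right)
  qed
  moreover have "\<exists>c. b * e * y - (\<Sum>h\<in>G. c h * h) \<in> K" if y: "y \<in> J" for y
  proof -
    obtain c where c: "e * y - (\<Sum>h\<in>insert g G. c h * h) \<in> K"
      using e(2) y by blast
    define ky where "ky = e * y - (\<Sum>h\<in>insert g G. c h * h)"
    have "e * y = c g * g + (\<Sum>h\<in>G. c h * h) + ky"
      using G by (simp add: ky_def)
    then have "b * e * y = b * (c g * g + (\<Sum>h\<in>G. c h * h) + ky)"
      by (simp add: mult.assoc)
    also have "\<dots> = c g * (b * g) + b * (\<Sum>h\<in>G. c h * h) + b * ky"
      by (simp add: distrib_left mult.left_commute)
    also have "\<dots> = (\<Sum>h\<in>G. (c g * a h + b * c h) * h) + (c g * (e * k0 + k) + b * ky)"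
      unfolding bg by (simp add: algebra_simps sum.distrib sum_distrib_left)
    finally have "b * e * y - (\<Sum>h\<in>G. (c g * a h + b * c h) * h) = c g * (e * k0 + k) + b * ky"
      by simp
    also have "\<dots> \<in> K"
      using ek c K by (simp add: ideal_add ideal_mult_left ky_def)
    finally show ?thesis by (intro exI[of _ "\<lambda>h. c g * a h + b * c h"])
  qed
  ultimately show ?thesis by (intro exI[of _ "b * e"]) blast
qed

lemma nakayama:
  assumes J: "is_ideal J" and K: "is_ideal K"
    and cov: "\<forall>y\<in>J. \<exists>k\<in>K. \<exists>v\<in>ideal_sq J. y = k + v"
    and G: "finite G" "G \<subseteq> J" "J \<subseteq> ideal_gen G"
  shows "\<exists>s\<in>J. \<forall>y\<in>J. (1 - s) * y \<in> K"
proof -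
  have reduce: "1 - e \<in> J \<Longrightarrow> \<forall>y\<in>J. \<exists>c. e * y - (\<Sum>h\<in>G. c h * h) \<in> K \<Longrightarrow>
      \<exists>e'. 1 - e' \<in> J \<and> (\<forall>y\<in>J. e' * y \<in> K)" for e
    using G(1,2)
  proof (induction G arbitrary: e rule: finite_induct)
    case empty
    then show ?case by auto
  next
    case (insert g G)
    have "\<exists>e'. 1 - e' \<in> J \<and> (\<forall>y\<in>J. \<exists>c. e' * y - (\<Sum>h\<in>G. c h * h) \<in> K)"
      by (rule nakayama_drop_generator[OF J K cov insert.hyps(1,2)]) (use insert.prems in auto)
    then obtain e' where "1 - e' \<in> J" "\<forall>y\<in>J. \<exists>c. e' * y - (\<Sum>h\<in>G. c h * h) \<in> K"
      by blast
    then show ?case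
      using insert.IH insert.prems(3) by simp
  qed
  have start: "\<exists>c. 1 * y - (\<Sum>h\<in>G. c h * h) \<in> K" if y: "y \<in> J" for y
  proof -
    have "y \<in> ideal_gen G" using y G(3) by blast
    then obtain c where "y = (\<Sum>h\<in>G. c h * h)"
      unfolding ideal_gen_iff by blast
    then show ?thesis using ideal_0[OF K] by (intro exI[of _ c]) simp
  qed
  obtain e where "1 - e \<in> J" "\<forall>y\<in>J. e * y \<in> K"
    using reduce[of 1] start ideal_0[OF J] by auto
  then show ?thesis by (intro bexI[of _ "1 - e"]) auto
qed

lemma module_mult: "module ((*) :: 'a::comm_ring_1 \<Rightarrow> 'a \<Rightarrow> 'a)"
  by unfold_locales (auto simp: algebra_simps)

lemma dualI:
  assumes "module sc" "\<And>x y. f (x + y) = f x + f y" "\<And>a x. f (sc a x) = a * f x"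
  shows "f \<in> dual sc"
  unfolding dual_def module_hom_def module_hom_axioms_def using assms module_mult by auto

lemma dual_hom: "f \<in> dual sc \<Longrightarrow> module_hom sc (*) f"
  by (simp add: dual_def)

lemma dual_module: "f \<in> dual sc \<Longrightarrow> module sc"
  by (simp add: dual_def module_hom_def)

lemma dual_add: "f \<in> dual sc \<Longrightarrow> f (x + y) = f x + f y"
  by (rule module_hom.add[OF dual_hom])

lemma dual_scale: "f \<in> dual sc \<Longrightarrow> f (sc a x) = a * f x"
  by (rule module_hom.scale[OF dual_hom])

lemma dual_zero: "f \<in> dual sc \<Longrightarrow> f 0 = 0"
  by (rule module_hom.zero[OF dual_hom])

lemma dual_sum: "f \<in> dual sc \<Longrightarrow> f (sum g S) = (\<Sum>x\<in>S. f (g x))"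
  by (rule module_hom.sum[OF dual_hom])

lemma dual_diff: "f \<in> dual sc \<Longrightarrow> f (x - y) = f x - f y"
  by (rule module_hom.diff[OF dual_hom])

lemma projective_module_module: "projective_module sc \<Longrightarrow> module sc"
  by (simp add: projective_module_def)

lemma is_ideal_range_dual:
  assumes "f \<in> dual sc"
  shows "is_ideal (range f)"
  unfolding is_ideal_def
proof (intro conjI ballI allI)
  show "0 \<in> range f" using dual_zero[OF assms] by (metis rangeI)
  show "x + y \<in> range f" if xy: "x \<in> range f" "y \<in> range f" for x y
  proof -
    obtain u v where "x = f u" "y = f v" using xy by blast
    then have "x + y = f (u + v)" by (simp add: dual_add[OF assms])
    then show ?thesis by simp
  qed
  show "a * x \<in> range f" if xy: "x \<in> range f" for a x
  proof -
    obtain u where "x = f u" using xy by blast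
    then have "a * x = f (sc a u)" by (simp add: dual_scale[OF assms])
    then show ?thesis by simp
  qed
qed

lemma sum_if_eq_delta: "(\<Sum>j\<le>d. if i + j = (n::nat) then X j else 0) = (if i \<le> n \<and> n - i \<le> d then X (n - i) else 0)"
proof -
  have "(\<Sum>j\<le>d. if i + j = n then X j else 0) = (\<Sum>j\<le>d. if j = n - i then (if i \<le> n then X j else 0) else 0)"
    by (rule sum.cong) auto
  also have "\<dots> = (if n - i \<le> d then (if i \<le> n then X (n - i) else 0) else 0)"
    by (subst sum.delta) auto
  finally show ?thesis by auto
qed

lemma coeff_pscale:
  assumes m: "module sc"
  shows "coeff (pscale sc a p) n = (\<Sum>i\<le>n. sc (coeff a i) (coeff p (n - i)))"
proof -
  have "coeff (pscale sc a p) n = (\<Sum>i\<le>degree a. \<Sum>j\<le>degree p. if i + j = n then sc (coeff a i) (coeff p j) else 0)"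
    unfolding pscale_def coeff_sum coeff_monom by (auto intro!: sum.cong)
  also have "\<dots> = (\<Sum>i\<le>degree a. if i \<le> n \<and> n - i \<le> degree p then sc (coeff a i) (coeff p (n - i)) else 0)"
    by (simp only: sum_if_eq_delta)
  also have "\<dots> = (\<Sum>i\<le>degree a. if i \<le> n then sc (coeff a i) (coeff p (n - i)) else 0)"
    by (intro sum.cong refl) (auto simp: coeff_eq_0 module.scale_zero_right[OF m])
  also have "\<dots> = (\<Sum>i\<in>{i\<in>{..degree a}. i \<le> n}. sc (coeff a i) (coeff p (n - i)))"
    by (rule sym, rule sum.inter_filter) simp
  also have "\<dots> = (\<Sum>i\<le>n. sc (coeff a i) (coeff p (n - i)))"
    by (rule sum.mono_neutral_left) (auto simp: coeff_eq_0 module.scale_zero_left[OF m] intro: ccontr)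
  finally show ?thesis .
qed

lemma pscale_add_right: "module sc \<Longrightarrow> pscale sc a (p + q) = pscale sc a p + pscale sc a q"
  by (rule poly_eqI) (simp add: coeff_pscale module.scale_right_distrib sum.distrib)

lemma pscale_add_left: "module sc \<Longrightarrow> pscale sc (a + b) p = pscale sc a p + pscale sc b p"
  by (rule poly_eqI) (simp add: coeff_pscale module.scale_left_distrib sum.distrib)

lemma coeff_pscale_const: "module sc \<Longrightarrow> coeff (pscale sc [:c:] p) n = sc c (coeff p n)"
proof -
  assume m: "module sc"
  have "(\<Sum>i\<le>n. sc (coeff [:c:] i) (coeff p (n - i))) = (\<Sum>i\<le>n. if i = 0 then sc c (coeff p n) else 0)"
    by (intro sum.cong refl) (auto simp: coeff_pCons split: nat.split simp: module.scale_zero_left[OF m])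
  then show ?thesis by (simp add: coeff_pscale[OF m])
qed

lemma pscale_const_const: "module sc \<Longrightarrow> pscale sc [:c:] [:q:] = [:sc c q:]"
  by (rule poly_eqI) (auto simp: coeff_pscale_const coeff_pCons module.scale_zero_right split: nat.split)

lemma pscale_smult: "module sc \<Longrightarrow> pscale sc (smult c b) p = pscale sc [:c:] (pscale sc b p)"
proof (rule poly_eqI)
  fix n assume m: "module sc"
  show "coeff (pscale sc (smult c b) p) n = coeff (pscale sc [:c:] (pscale sc b p)) n"
    unfolding coeff_pscale_const[OF m]
      by (simp add: coeff_pscale[OF m] module.scale_sum_right[OF m] module.scale_scale[OF m])
qed

lemma pscale_pCons0: "module sc \<Longrightarrow> pscale sc (pCons 0 a) p = pCons 0 (pscale sc a p)"
proof (rule poly_eqI)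
  fix n assume m: "module sc"
  show "coeff (pscale sc (pCons 0 a) p) n = coeff (pCons 0 (pscale sc a p)) n"
  proof (cases n)
    case 0 then show ?thesis by (simp add: coeff_pscale[OF m] module.scale_zero_left[OF m])
  next
    case (Suc k)
    have "coeff (pscale sc (pCons 0 a) p) n = (\<Sum>i\<le>Suc k. sc (coeff (pCons 0 a) i) (coeff p (Suc k - i)))"
      by (simp add: coeff_pscale[OF m] Suc)
    also have "\<dots> = (\<Sum>i\<le>k. sc (coeff a i) (coeff p (k - i)))"
      by (subst sum.atMost_Suc_shift) (simp add: module.scale_zero_left[OF m])
    finally show ?thesis by (simp add: Suc coeff_pscale[OF m])
  qed
qed

lemma pscale_pCons: "module sc \<Longrightarrow> pscale sc (pCons c a) p = pscale sc [:c:] p + pCons 0 (pscale sc a p)"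
proof -
  assume m: "module sc"
  have "pCons c a = [:c:] + pCons 0 a" by simp
  then show ?thesis by (metis pscale_add_left[OF m] pscale_pCons0[OF m])
qed

lemma pscale_zero_left: "module sc \<Longrightarrow> pscale sc 0 p = 0"
  by (rule poly_eqI) (simp add: coeff_pscale module.scale_zero_left)

lemma pscale_scale: fixes sc :: "'a::comm_ring_1 \<Rightarrow> 'b::ab_group_add \<Rightarrow> 'b"
  assumes m: "module sc" shows "pscale sc a (pscale sc b p) = pscale sc (a * b) p"
proof (induction a rule: pCons_induct)
  show "pscale sc 0 (pscale sc b p) = pscale sc (0 * b) p" by (simp add: pscale_zero_left[OF m])
next
  fix c :: 'a and a :: "'a poly" assume _: "c \<noteq> 0 \<or> a \<noteq> 0"
    and IH: "pscale sc a (pscale sc b p) = pscale sc (a * b) p"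
  have "pscale sc (pCons c a) (pscale sc b p) = pscale sc [:c:] (pscale sc b p) + pCons 0 (pscale sc (a * b) p)"
    by (subst pscale_pCons[OF m]) (simp only: IH)
  also have "\<dots> = pscale sc (smult c b) p + pscale sc (pCons 0 (a * b)) p"
    by (simp add: pscale_smult[OF m] pscale_pCons0[OF m])
  also have "\<dots> = pscale sc (pCons c a * b) p"
    by (simp add: mult_pCons_left pscale_add_left[OF m])
  finally show "pscale sc (pCons c a) (pscale sc b p) = pscale sc (pCons c a * b) p" .
qed

lemma pscale_one:
  assumes m: "module sc"
  shows "pscale sc 1 p = p"
proof -
  have "pscale sc [:1:] p = p" by (rule poly_eqI)
    (simp add: coeff_pscale_const[OF m] module.scale_one[OF m])
  then show ?thesis by (metis one_pCons)
qed

lemma module_pscale: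
  assumes m: "module sc"
  shows "module (pscale sc)"
proof (unfold_locales)
  show "pscale sc a (x + y) = pscale sc a x + pscale sc a y" for a x y by (rule pscale_add_right[OF m])
  show "pscale sc (a + b) x = pscale sc a x + pscale sc b x" for a b x by (rule pscale_add_left[OF m])
  show "pscale sc a (pscale sc b x) = pscale sc (a * b) x" for a b x by (rule pscale_scale[OF m])
  show "pscale sc 1 x = x" for x by (rule pscale_one[OF m])
qed

definition pext :: "('b::zero \<Rightarrow> 'a::comm_monoid_add) \<Rightarrow> 'b poly \<Rightarrow> 'a poly" where
  "pext f Q = (\<Sum>j\<le>degree Q. monom (f (coeff Q j)) j)"

lemma coeff_pext: "f 0 = 0 \<Longrightarrow> coeff (pext f Q) n = f (coeff Q n)"
  unfolding pext_def coeff_sum coeff_monom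
  by (cases "n \<le> degree Q") (auto simp: coeff_eq_0 sum.delta)

lemma pext_dual:
  assumes f: "f \<in> dual sc"
  shows "pext f \<in> dual (pscale sc)"
proof -
  have m: "module sc" using dual_module[OF f] .
  have z: "f 0 = 0" using dual_zero[OF f] .
  show ?thesis
  proof (rule dualI[OF module_pscale[OF m]])
    show "pext f (x + y) = pext f x + pext f y" for x y
      by (rule poly_eqI) (simp add: coeff_pext[of f, OF z] dual_add[OF f])
    show "pext f (pscale sc a x) = a * pext f x" for a x
      by (rule poly_eqI)
        (simp add: coeff_pext[of f, OF z] coeff_pscale[OF m] coeff_mult dual_sum[OF f] dual_scale[OF f])
  qed
qed

lemma pext_const: "f 0 = 0 \<Longrightarrow> pext f [:q:] = [:f q:]"
  by (rule poly_eqI) (simp add: coeff_pext coeff_pCons split: nat.split)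

lemma spec_dual_pext: "f \<in> dual sc \<Longrightarrow> spec_dual t (pext f) = f"
  by (rule ext) (simp add: spec_dual_def pext_const dual_zero)

lemma range_pext: assumes f: "f \<in> dual sc" and Q: "\<forall>j. coeff Q j \<in> range f"
  shows "Q \<in> range (pext f)"
proof -
  define g where "g j = (SOME x. f x = coeff Q j)" for j
  have g: "f (g j) = coeff Q j" for j
    unfolding g_def by (rule someI_ex) (use Q[rule_format, of j] in \<open>auto simp: image_iff eq_commute\<close>)
  define P where "P = (\<Sum>j\<le>degree Q. monom (g j) j)"
  have "coeff P j = (if j \<le> degree Q then g j else 0)" for j
    by (simp add: P_def coeff_sum coeff_monom sum.delta)
  then have "pext f P = Q"
    by (intro poly_eqI) (auto simp: coeff_pext dual_zero[OF f] g coeff_eq_0)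
  then show ?thesis by (metis rangeI)
qed

lemma peval_le: assumes m: "module sc" and d: "degree Q \<le> n"
  shows "peval sc t Q = (\<Sum>j\<le>n. sc (t ^ j) (coeff Q j))"
  unfolding peval_def
  by (rule sum.mono_neutral_left) (use d in \<open>auto simp: coeff_eq_0 module.scale_zero_right[OF m]\<close>)

lemma monom_pscale: "module sc \<Longrightarrow> monom q j = pscale sc (monom 1 j) [:q:]"
proof (rule poly_eqI)
  fix n assume m: "module sc"
  have "(\<Sum>i\<le>n. sc (coeff (monom 1 j) i) (coeff [:q:] (n - i))) = (\<Sum>i\<le>n. if i = j then (if n = j then q else 0) else 0)"
    by (intro sum.cong refl)
      (auto simp: coeff_monom coeff_pCons module.scale_zero_left[OF m] module.scale_one[OF m] module.scale_zero_right[OF m] split: nat.split)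
  then show "coeff (monom q j) n = coeff (pscale sc (monom 1 j) [:q:]) n"
    by (simp add: coeff_pscale[OF m] coeff_monom sum.delta)
qed

lemma const_sum: "[:sum f S:] = (\<Sum>x\<in>S. [:f x:])"
  by (rule poly_eqI) (simp add: coeff_sum coeff_pCons split: nat.split)

lemma poly_dual_eval:
  assumes F: "F \<in> dual (pscale sc)" and m: "module sc"
  shows "poly (F Q) t = spec_dual t F (peval sc t Q)"
proof -
  have "F Q = F (\<Sum>j\<le>degree Q. pscale sc (monom 1 j) [:coeff Q j:])"
    by (simp add: monom_pscale[OF m, symmetric] poly_as_sum_of_monoms)
  also have "\<dots> = (\<Sum>j\<le>degree Q. monom 1 j * F [:coeff Q j:])"
    by (simp add: dual_sum[OF F] dual_scale[OF F])
  finally have 1: "poly (F Q) t = (\<Sum>j\<le>degree Q. t ^ j * poly (F [:coeff Q j:]) t)"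
    by (simp add: poly_sum poly_monom)
  have "spec_dual t F (peval sc t Q) = poly (F (\<Sum>j\<le>degree Q. pscale sc [:t ^ j:] [:coeff Q j:])) t"
    by (simp add: spec_dual_def peval_def const_sum pscale_const_const[OF m])
  also have "\<dots> = (\<Sum>j\<le>degree Q. t ^ j * poly (F [:coeff Q j:]) t)"
    by (simp add: dual_sum[OF F] dual_scale[OF F] poly_sum)
  finally show ?thesis using 1 by simp
qed

section \<open>Hilbert's basis theorem\<close>

definition coeff_ideal :: "'a::comm_ring_1 poly set \<Rightarrow> nat \<Rightarrow> 'a set" where
  "coeff_ideal J n = {coeff g n | g. g \<in> J \<and> degree g \<le> n}"

lemma is_ideal_coeff_ideal:
  assumes J: "is_ideal J"
  shows "is_ideal (coeff_ideal J n)"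
  unfolding is_ideal_def coeff_ideal_def
proof (intro conjI ballI allI)
  show "0 \<in> {coeff g n |g. g \<in> J \<and> degree g \<le> n}"
    using ideal_0[OF J] by force
  show "x + y \<in> {coeff g n |g. g \<in> J \<and> degree g \<le> n}"
    if xy: "x \<in> {coeff g n |g. g \<in> J \<and> degree g \<le> n}" "y \<in> {coeff g n |g. g \<in> J \<and> degree g \<le> n}"
    for x y
  proof -
    obtain g h where "g \<in> J" "degree g \<le> n" "x = coeff g n" "h \<in> J" "degree h \<le> n" "y = coeff h n"
      using xy by blast
    then show ?thesis
      by (auto intro!: exI[of _ "g + h"] ideal_add[OF J] degree_add_le)
  qed
  show "a * x \<in> {coeff g n |g. g \<in> J \<and> degree g \<le> n}"
    if x: "x \<in> {coeff g n |g. g \<in> J \<and> degree g \<le> n}" for a x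
  proof -
    obtain g where "g \<in> J" "degree g \<le> n" "x = coeff g n"
      using x by blast
    then show ?thesis
      by (auto intro!: exI[of _ "[:a:] * g"] ideal_mult_left[OF J] order.trans[OF degree_mult_le])
  qed
qed

lemma coeff_ideal_mono:
  assumes J: "is_ideal J" and "m \<le> n"
  shows "coeff_ideal J m \<subseteq> coeff_ideal J n"
proof (rule lift_Suc_mono_le[of "coeff_ideal J", OF _ \<open>m \<le> n\<close>])
  fix k
  show "coeff_ideal J k \<subseteq> coeff_ideal J (Suc k)"
  proof
    fix a assume "a \<in> coeff_ideal J k"
    then obtain g where g: "g \<in> J" "degree g \<le> k" "coeff g k = a"
      unfolding coeff_ideal_def by blast
    have "pCons 0 g = monom 1 1 * g" by (simp add: monom_Suc)
    then have "pCons 0 g \<in> J" using ideal_mult_left[OF J g(1)] by metis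
    moreover have "degree (pCons 0 g) \<le> Suc k"
      using g(2) degree_pCons_le[of 0 g] by linarith
    ultimately show "a \<in> coeff_ideal J (Suc k)"
      unfolding coeff_ideal_def using g(3) by force
  qed
qed

text \<open>The ascending chain of coefficient ideals becomes stationary, because its union is
  finitely generated.\<close>
lemma coeff_ideal_stationary:
  assumes N: "noetherian_ring TYPE('a::comm_ring_1)" and J: "is_ideal (J :: 'a poly set)"
  shows "\<exists>n0. \<forall>n. coeff_ideal J n \<subseteq> coeff_ideal J n0"
proof -
  have "is_ideal (\<Union>n. coeff_ideal J n)"
    unfolding is_ideal_def
  proof (intro conjI ballI allI)
    show "0 \<in> (\<Union>n. coeff_ideal J n)"
      using ideal_0[OF is_ideal_coeff_ideal[OF J]] by blast
    show "x + y \<in> (\<Union>n. coeff_ideal J n)"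
      if xy: "x \<in> (\<Union>n. coeff_ideal J n)" "y \<in> (\<Union>n. coeff_ideal J n)" for x y
    proof -
      obtain m k where "x \<in> coeff_ideal J m" "y \<in> coeff_ideal J k" using xy by blast
      then have "x \<in> coeff_ideal J (max m k)" "y \<in> coeff_ideal J (max m k)"
        using coeff_ideal_mono[OF J, of m "max m k"] coeff_ideal_mono[OF J, of k "max m k"] by auto
      then show ?thesis using ideal_add[OF is_ideal_coeff_ideal[OF J]] by blast
    qed
    show "a * x \<in> (\<Union>n. coeff_ideal J n)" if "x \<in> (\<Union>n. coeff_ideal J n)" for a x
      using that ideal_mult_left[OF is_ideal_coeff_ideal[OF J]] by blast
  qed
  from noetherian_ring_finitely_generated[OF N this]
  obtain F where F: "finite F" "F \<subseteq> (\<Union>n. coeff_ideal J n)" "(\<Union>n. coeff_ideal J n) = ideal_gen F"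
    by blast
  have "\<forall>x\<in>F. \<exists>n. x \<in> coeff_ideal J n" using F(2) by blast
  then obtain level where level: "\<And>x. x \<in> F \<Longrightarrow> x \<in> coeff_ideal J (level x)"
    by metis
  have "F \<subseteq> coeff_ideal J (Max (level ` F))"
  proof
    fix x assume x: "x \<in> F"
    then have "level x \<le> Max (level ` F)" using F(1) by simp
    then show "x \<in> coeff_ideal J (Max (level ` F))"
      using level[OF x] coeff_ideal_mono[OF J] by blast
  qed
  then have "ideal_gen F \<subseteq> coeff_ideal J (Max (level ` F))"
    by (rule ideal_gen_least[OF is_ideal_coeff_ideal[OF J]])
  then show ?thesis using F(3) by blast
qed

lemma coeff_shifted_sum:
  assumes "m \<le> k" "\<And>u. u \<in> U \<Longrightarrow> degree u \<le> m" "k \<le> i"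
  shows "coeff (\<Sum>u\<in>U. monom (c u) (k - m) * u) i = (if i = k then (\<Sum>u\<in>U. c u * coeff u m) else 0)"
proof (cases "i = k")
  case False
  have "coeff (monom (c u) (k - m) * u) i = 0" if "u \<in> U" for u
  proof -
    have "degree u < i - (k - m)" using assms False assms(2)[OF that] by linarith
    then show ?thesis using assms by (simp add: coeff_monom_mult coeff_eq_0)
  qed
  then show ?thesis using False by (simp add: coeff_sum)
next
  case True
  have "\<not> k < k - m" "k - (k - m) = m" using assms(1) by auto
  then show ?thesis using True by (simp add: coeff_sum coeff_monom_mult)
qed

text \<open>Induction on the degree: the top coefficient of \<open>g \<in> J\<close> of degree \<open>\<le> k\<close> lies in
  \<open>coeff_ideal J (min k n0)\<close>, so subtracting a combination of shifted members of \<open>G\<close> lowers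
  the degree.\<close>
lemma coeff_ideal_generators_generate:
  assumes J: "is_ideal J" and G: "finite G" "G \<subseteq> J"
    and stat: "\<And>n. coeff_ideal J n \<subseteq> coeff_ideal J n0"
    and gen: "\<And>n a. n \<le> n0 \<Longrightarrow> a \<in> coeff_ideal J n \<Longrightarrow>
      \<exists>c. a = (\<Sum>g\<in>{g\<in>G. degree g \<le> n}. c g * coeff g n)"
  shows "J \<subseteq> ideal_gen G"
proof -
  have main: "g \<in> ideal_gen G" if "g \<in> J" "\<forall>i\<ge>k. coeff g i = 0" for g k
    using that
  proof (induction k arbitrary: g)
    case 0
    then have "g = 0" by (intro poly_eqI) simp
    then show ?case using ideal_0[OF is_ideal_ideal_gen] by simp
  next
    case (Suc k)
    define m where "m = min k n0"
    have "degree g \<le> k"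
      using Suc.prems(2) by (intro degree_le) simp
    then have "coeff g k \<in> coeff_ideal J m"
      unfolding coeff_ideal_def using Suc.prems(1) stat[of k, unfolded coeff_ideal_def]
      by (cases "k \<le> n0") (auto simp: m_def)
    then obtain c where c: "coeff g k = (\<Sum>u\<in>{u\<in>G. degree u \<le> m}. c u * coeff u m)"
      using gen[of m] by (auto simp: m_def)
    define r where "r = (\<Sum>u\<in>{u\<in>G. degree u \<le> m}. monom (c u) (k - m) * u)"
    have "r \<in> ideal_gen G"
      unfolding r_def using G(1)
      by (intro ideal_sum[OF is_ideal_ideal_gen] ideal_mult_left[OF is_ideal_ideal_gen] ideal_gen_base) auto
    moreover have "g - r \<in> ideal_gen G"
    proof (rule Suc.IH)
      have "r \<in> J"
        unfolding r_def using G(2) by (intro ideal_sum[OF J] ideal_mult_left[OF J]) auto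
      then show "g - r \<in> J" using Suc.prems(1) J by (simp add: ideal_diff)
      show "\<forall>i\<ge>k. coeff (g - r) i = 0"
        using Suc.prems(2) coeff_shifted_sum[of m k "{u\<in>G. degree u \<le> m}" _ c] c
        by (auto simp: r_def m_def)
    qed
    ultimately show ?case
      using ideal_add[OF is_ideal_ideal_gen, of "g - r" G r] by simp
  qed
  show ?thesis
  proof
    fix g assume "g \<in> J"
    moreover have "\<forall>i\<ge>Suc (degree g). coeff g i = 0" by (auto intro: coeff_eq_0)
    ultimately show "g \<in> ideal_gen G" by (rule main)
  qed
qed

theorem noetherian_ring_poly:
  assumes N: "noetherian_ring TYPE('a::comm_ring_1)"
  shows "noetherian_ring TYPE('a poly)"
  unfolding noetherian_ring_def
proof (intro allI impI)
  fix J :: "'a poly set" assume J: "is_ideal J"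
  obtain n0 where stat: "\<And>n. coeff_ideal J n \<subseteq> coeff_ideal J n0"
    using coeff_ideal_stationary[OF N J] by blast
  have "\<forall>n. \<exists>F. finite F \<and> F \<subseteq> coeff_ideal J n \<and> coeff_ideal J n = ideal_gen F"
    using noetherian_ring_finitely_generated[OF N is_ideal_coeff_ideal[OF J]] by blast
  then obtain F where F: "\<And>n. finite (F n)" "\<And>n. F n \<subseteq> coeff_ideal J n"
    "\<And>n. coeff_ideal J n = ideal_gen (F n)"
    by metis
  define lift where "lift n b = (SOME g. g \<in> J \<and> degree g \<le> n \<and> coeff g n = b)" for n b
  have lift: "lift n b \<in> J" "degree (lift n b) \<le> n" "coeff (lift n b) n = b" if "b \<in> F n" for n b
    using someI_ex[of "\<lambda>g. g \<in> J \<and> degree g \<le> n \<and> coeff g n = b"] that F(2)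
    unfolding lift_def coeff_ideal_def by blast+
  define G where "G = (\<Union>n\<le>n0. lift n ` F n)"
  have G: "finite G" "G \<subseteq> J"
    unfolding G_def using F(1) lift(1) by auto
  have "\<exists>c. a = (\<Sum>g\<in>{g\<in>G. degree g \<le> n}. c g * coeff g n)"
    if n: "n \<le> n0" and a: "a \<in> coeff_ideal J n" for n a
  proof -
    obtain c where c: "a = (\<Sum>b\<in>F n. c b * b)"
      using a unfolding F(3) ideal_gen_iff by blast
    have sub: "lift n ` F n \<subseteq> {g\<in>G. degree g \<le> n}"
      using n lift(2) unfolding G_def by blast
    have inj: "inj_on (lift n) (F n)"
      by (metis inj_onI lift(3))
    have "a = (\<Sum>g\<in>lift n ` F n. c (coeff g n) * coeff g n)"
      unfolding c sum.reindex[OF inj] by (simp add: lift(3))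
    also have "\<dots> = (\<Sum>g\<in>{g\<in>G. degree g \<le> n}.
        (if g \<in> lift n ` F n then c (coeff g n) else 0) * coeff g n)"
      using G(1) sub by (intro sum.mono_neutral_cong_left) auto
    finally show ?thesis
      by (intro exI[of _ "\<lambda>g. if g \<in> lift n ` F n then c (coeff g n) else 0"])
  qed
  then have "J \<subseteq> ideal_gen G"
    by (rule coeff_ideal_generators_generate[OF J G stat])
  then show "\<exists>F. finite F \<and> F \<subseteq> J \<and> J = ideal_gen F"
    using G ideal_gen_least[OF J G(2)] by blast
qed

section \<open>Projectivity of \<open>P[T]\<close>\<close>

lemma coeff_pscale_const_right:
  assumes m: "module sc"
  shows "coeff (pscale sc a [:x:]) n = sc (coeff a n) x"
proof -
  have "(\<Sum>i\<le>n. sc (coeff a i) (coeff [:x:] (n - i))) = (\<Sum>i\<le>n. if i = n then sc (coeff a n) x else 0)"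
    by (intro sum.cong refl) (auto simp: coeff_pCons module.scale_zero_right[OF m] split: nat.split)
  then show ?thesis by (simp add: coeff_pscale[OF m])
qed

lemma pext_dual_basis:
  assumes m: "module sc" and \<phi>: "\<And>x. \<phi> x \<in> dual sc" "\<And>p. finite {x. \<phi> x p \<noteq> 0}"
    "\<And>p. p = (\<Sum>x\<in>{x. \<phi> x p \<noteq> 0}. sc (\<phi> x p) x)"
  shows "finite {x. pext (\<phi> x) Q \<noteq> 0}"
    and "Q = (\<Sum>x\<in>{x. pext (\<phi> x) Q \<noteq> 0}. pscale sc (pext (\<phi> x) Q) [:x:])"
proof -
  define T where "T = {x. pext (\<phi> x) Q \<noteq> 0}"
  have coeff_pext_\<phi>: "coeff (pext (\<phi> x) Q) j = \<phi> x (coeff Q j)" for x j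
    by (rule coeff_pext[of "\<phi> x", OF dual_zero[OF \<phi>(1)]])
  have "T \<subseteq> (\<Union>j\<le>degree Q. {x. \<phi> x (coeff Q j) \<noteq> 0})"
  proof
    fix x assume "x \<in> T"
    then have "\<phi> x (coeff Q (degree (pext (\<phi> x) Q))) \<noteq> 0"
      unfolding T_def coeff_pext_\<phi>[symmetric] by simp
    then obtain j where nz: "\<phi> x (coeff Q j) \<noteq> 0" by blast
    have "j \<le> degree Q"
    proof (rule ccontr)
      assume "\<not> j \<le> degree Q"
      then have "coeff Q j = 0" by (simp add: coeff_eq_0)
      then show False using nz dual_zero[OF \<phi>(1)] by simp
    qed
    with nz show "x \<in> (\<Union>j\<le>degree Q. {x. \<phi> x (coeff Q j) \<noteq> 0})" by blast
  qed
  then show T_fin: "finite {x. pext (\<phi> x) Q \<noteq> 0}"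
    unfolding T_def[symmetric] by (rule finite_subset) (use \<phi>(2) in auto)
  show "Q = (\<Sum>x\<in>{x. pext (\<phi> x) Q \<noteq> 0}. pscale sc (pext (\<phi> x) Q) [:x:])"
  proof (rule poly_eqI)
    fix n
    have "{x. \<phi> x (coeff Q n) \<noteq> 0} \<subseteq> T"
      unfolding T_def by (auto simp flip: coeff_pext_\<phi>)
    then have "(\<Sum>x\<in>T. sc (\<phi> x (coeff Q n)) x) = (\<Sum>x\<in>{x. \<phi> x (coeff Q n) \<noteq> 0}. sc (\<phi> x (coeff Q n)) x)"
      using T_fin unfolding T_def[symmetric]
      by (intro sum.mono_neutral_right) (auto simp: module.scale_zero_left[OF m])
    then show "coeff Q n = coeff (\<Sum>x\<in>{x. pext (\<phi> x) Q \<noteq> 0}. pscale sc (pext (\<phi> x) Q) [:x:]) n"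
      using \<phi>(3)[of "coeff Q n"]
      by (simp add: T_def coeff_sum coeff_pscale_const_right[OF m] coeff_pext_\<phi>)
  qed
qed

theorem projective_module_pscale:
  fixes sc :: "'a::comm_ring_1 \<Rightarrow> 'b::ab_group_add \<Rightarrow> 'b"
  assumes P: "projective_module sc"
  shows "projective_module (pscale sc)"
proof -
  note m = projective_module_module[OF P]
  obtain \<phi> :: "'b \<Rightarrow> 'b \<Rightarrow> 'a" where \<phi>: "\<And>x. \<phi> x \<in> dual sc"
    "\<And>p. finite {x. \<phi> x p \<noteq> 0}" "\<And>p. p = (\<Sum>x\<in>{x. \<phi> x p \<noteq> 0}. sc (\<phi> x p) x)"
    using P unfolding projective_module_def by blast
  define \<Phi> :: "'b poly \<Rightarrow> 'b poly \<Rightarrow> 'a poly" where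
    "\<Phi> X = (if degree X = 0 then pext (\<phi> (coeff X 0)) else (\<lambda>_. 0))" for X
  have "\<Phi> X \<in> dual (pscale sc)" for X
    unfolding \<Phi>_def using pext_dual[OF \<phi>(1)] module_pscale[OF m]
    by (auto intro: dualI)
  moreover have "finite {X. \<Phi> X Q \<noteq> 0} \<and> Q = (\<Sum>X\<in>{X. \<Phi> X Q \<noteq> 0}. pscale sc (\<Phi> X Q) X)" for Q
  proof -
    have supp: "{X. \<Phi> X Q \<noteq> 0} = (\<lambda>x. [:x:]) ` {x. pext (\<phi> x) Q \<noteq> 0}"
      unfolding \<Phi>_def by (auto simp: image_iff degree_eq_zeroE intro: degree_eq_zeroE)
    have "inj (\<lambda>x::'b. [:x:])" by (auto intro: injI)
    then show ?thesis
      unfolding supp using pext_dual_basis[OF m \<phi>, of Q]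
      by (simp add: sum.reindex inj_on_def \<Phi>_def)
  qed
  ultimately show ?thesis
    unfolding projective_module_def using module_pscale[OF m] by blast
qed

section \<open>Local orientations\<close>

lemma LO_D:
  assumes "(I, \<omega>) \<in> LO sc"
  shows "is_ideal I" "\<omega> p \<in> quot_sq I"
    "x \<in> \<omega> p \<Longrightarrow> y \<in> \<omega> q \<Longrightarrow> x + y \<in> \<omega> (p + q)"
    "x \<in> \<omega> p \<Longrightarrow> a * x \<in> \<omega> (sc a p)"
    "x \<in> I \<Longrightarrow> \<exists>p. x \<in> \<omega> p"
  using assms unfolding LO_def by auto

lemma coset_eq:
  assumes I: "is_ideal I" and C: "C \<in> quot_sq I" and u: "u \<in> C"
  shows "C = (+) u ` ideal_sq I"
proof -
  obtain x where x: "x \<in> I" "C = (+) x ` ideal_sq I" using C unfolding quot_sq_def by blast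
  obtain e where e: "e \<in> ideal_sq I" "u = x + e" using u x by blast
  have sq: "is_ideal (ideal_sq I)" using is_ideal_ideal_sq[OF I] .
  show ?thesis
  proof
    show "C \<subseteq> (+) u ` ideal_sq I"
    proof
      fix y assume "y \<in> C"
      then obtain e' where "e' \<in> ideal_sq I" "y = x + e'" using x by blast
      then have "y = u + (e' - e)" "e' - e \<in> ideal_sq I" using e ideal_diff[OF sq] by auto
      then show "y \<in> (+) u ` ideal_sq I" by blast
    qed
    show "(+) u ` ideal_sq I \<subseteq> C"
    proof
      fix y assume "y \<in> (+) u ` ideal_sq I"
      then obtain e' where "e' \<in> ideal_sq I" "y = u + e'" by blast
      then have "y = x + (e + e')" "e + e' \<in> ideal_sq I" using e ideal_add[OF sq] by auto
      then show "y \<in> C" using x by blast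
    qed
  qed
qed

lemma coset_mem_diff:
  assumes I: "is_ideal I" and C: "C \<in> quot_sq I" and u: "u \<in> C" and v: "v \<in> C"
  shows "v - u \<in> ideal_sq I"
proof -
  have "C = (+) u ` ideal_sq I" by (rule coset_eq[OF I C u])
  then obtain e where "e \<in> ideal_sq I" "v = u + e" using v by blast
  then show ?thesis by simp
qed

lemma coset_mem_ideal:
  assumes I: "is_ideal I" and C: "C \<in> quot_sq I" and u: "u \<in> C"
  shows "u \<in> I"
proof -
  obtain x where x: "x \<in> I" "C = (+) x ` ideal_sq I" using C unfolding quot_sq_def by blast
  then obtain e where "e \<in> ideal_sq I" "u = x + e" using u by blast
  then show ?thesis using x ideal_sq_subset[OF I] ideal_add[OF I] by auto
qed

lemma coset_nonempty:
  assumes I: "is_ideal I" and C: "C \<in> quot_sq I"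
  shows "\<exists>u. u \<in> C"
  using C ideal_sq_0 unfolding quot_sq_def by blast

lemma LO_sum:
  assumes L: "(I, \<omega>) \<in> LO sc" and m: "module sc" and r: "\<And>x. r x \<in> \<omega> x"
  shows "(\<Sum>x\<in>S. c x * r x) \<in> \<omega> (\<Sum>x\<in>S. sc (c x) x)"
proof (induction S rule: infinite_finite_induct)
  case (infinite A)
  obtain u where "u \<in> \<omega> 0" using coset_nonempty[OF LO_D(1,2)[OF L]] by blast
  then have "0 * u \<in> \<omega> (sc 0 0)" by (rule LO_D(4)[OF L])
  then show ?case using infinite by (simp add: module.scale_zero_left[OF m])
next
  case empty
  obtain u where "u \<in> \<omega> 0" using coset_nonempty[OF LO_D(1,2)[OF L]] by blast
  then have "0 * u \<in> \<omega> (sc 0 0)" by (rule LO_D(4)[OF L])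
  then show ?case by (simp add: module.scale_zero_left[OF m])
next
  case (insert x F)
  have "c x * r x \<in> \<omega> (sc (c x) x)" by (rule LO_D(4)[OF L r])
  then show ?case using insert LO_D(3)[OF L] by simp
qed

lemma dual_basis_extension:
  assumes m: "module sc" and \<phi>: "\<And>x. \<phi> x \<in> dual sc" "\<And>p. finite {x. \<phi> x p \<noteq> 0}"
  shows "(\<lambda>p. \<Sum>x\<in>{x. \<phi> x p \<noteq> 0}. \<phi> x p * r x) \<in> dual sc"
proof -
  define S where "S p = {x. \<phi> x p \<noteq> 0}" for p
  have S_fin: "finite (S p)" for p using \<phi>(2) by (simp add: S_def)
  have sum_S: "(\<Sum>x\<in>S p. \<phi> x p * r x) = (\<Sum>x\<in>T. \<phi> x p * r x)" if "finite T" "S p \<subseteq> T" for p T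
    by (rule sum.mono_neutral_left) (use that in \<open>auto simp: S_def\<close>)
  show ?thesis
    unfolding S_def[symmetric]
  proof (rule dualI[OF m])
    fix p q
    let ?T = "S p \<union> S q \<union> S (p + q)"
    have T: "finite ?T" using S_fin by auto
    have "(\<Sum>x\<in>S (p + q). \<phi> x (p + q) * r x) = (\<Sum>x\<in>?T. \<phi> x (p + q) * r x)"
      by (rule sum_S[OF T]) auto
    also have "\<dots> = (\<Sum>x\<in>?T. \<phi> x p * r x) + (\<Sum>x\<in>?T. \<phi> x q * r x)"
      by (simp add: dual_add[OF \<phi>(1)] distrib_right sum.distrib)
    also have "\<dots> = (\<Sum>x\<in>S p. \<phi> x p * r x) + (\<Sum>x\<in>S q. \<phi> x q * r x)"
    proof -
      have "S p \<subseteq> ?T" "S q \<subseteq> ?T" by auto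
      then show ?thesis by (simp only: sum_S[OF T])
    qed
    finally show "(\<Sum>x\<in>S (p + q). \<phi> x (p + q) * r x) = (\<Sum>x\<in>S p. \<phi> x p * r x) + (\<Sum>x\<in>S q. \<phi> x q * r x)" .
  next
    fix a p
    have "S (sc a p) \<subseteq> S p" unfolding S_def by (auto simp: dual_scale[OF \<phi>(1)])
    then have "(\<Sum>x\<in>S (sc a p). \<phi> x (sc a p) * r x) = (\<Sum>x\<in>S p. \<phi> x (sc a p) * r x)"
      by (rule sum_S[OF S_fin])
    also have "\<dots> = a * (\<Sum>x\<in>S p. \<phi> x p * r x)"
      by (simp add: dual_scale[OF \<phi>(1)] sum_distrib_left mult.assoc)
    finally show "(\<Sum>x\<in>S (sc a p). \<phi> x (sc a p) * r x) = a * (\<Sum>x\<in>S p. \<phi> x p * r x)" .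
  qed
qed

lemma LO_lift_exists:
  assumes P: "projective_module sc" and L: "(I, \<omega>) \<in> LO sc"
  shows "\<exists>f\<in>dual sc. \<forall>p. f p \<in> \<omega> p"
proof -
  note m = projective_module_module[OF P]
  obtain \<phi> where \<phi>: "\<And>x. \<phi> x \<in> dual sc"
    "\<And>p. finite {x. \<phi> x p \<noteq> 0}" "\<And>p. p = (\<Sum>x\<in>{x. \<phi> x p \<noteq> 0}. sc (\<phi> x p) x)"
    using P unfolding projective_module_def by blast
  define r where "r x = (SOME u. u \<in> \<omega> x)" for x
  have r: "r x \<in> \<omega> x" for x
    unfolding r_def by (rule someI_ex) (rule coset_nonempty[OF LO_D(1,2)[OF L]])
  show ?thesis
  proof (rule bexI[OF _ dual_basis_extension[OF m \<phi>(1,2), of r]], intro allI)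
    show "(\<Sum>x\<in>{x. \<phi> x p \<noteq> 0}. \<phi> x p * r x) \<in> \<omega> p" for p
      using LO_sum[OF L m r, of "\<lambda>x. \<phi> x p" "{x. \<phi> x p \<noteq> 0}"] \<phi>(3)[of p] by simp
  qed
qed

lemma LO_lift:
  assumes L: "(I, \<omega>) \<in> LO sc" and f: "f \<in> dual sc" and fo: "\<And>p. f p \<in> \<omega> p"
  shows "\<And>p. f p \<in> I" "\<forall>y\<in>I. \<exists>k\<in>range f. \<exists>v\<in>ideal_sq I. y = k + v"
proof -
  have I: "is_ideal I" using LO_D(1)[OF L] .
  show fI: "f p \<in> I" for p using coset_mem_ideal[OF I LO_D(2)[OF L] fo] .
  show "\<forall>y\<in>I. \<exists>k\<in>range f. \<exists>v\<in>ideal_sq I. y = k + v"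
  proof
    fix y assume "y \<in> I"
    then obtain p where "y \<in> \<omega> p" using LO_D(5)[OF L] by blast
    then have "y - f p \<in> ideal_sq I" using coset_mem_diff[OF I LO_D(2)[OF L] fo] by blast
    then show "\<exists>k\<in>range f. \<exists>v\<in>ideal_sq I. y = k + v"
      by (intro bexI[of _ "f p"] bexI[of _ "y - f p"]) auto
  qed
qed

lemma chi_wit_exists:
  assumes N: "noetherian_ring TYPE('a::comm_ring_1)"
    and P: "projective_module (sc :: 'a \<Rightarrow> 'b::ab_group_add \<Rightarrow> 'b)"
    and L: "x \<in> LO sc"
  shows "\<exists>a. chi_wit sc x a"
proof -
  obtain I \<omega> where x: "x = (I, \<omega>)" by (cases x)
  have L': "(I, \<omega>) \<in> LO sc" using L x by simp
  have I: "is_ideal I" using LO_D(1)[OF L'] .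
  obtain f where f: "f \<in> dual sc" "\<And>p. f p \<in> \<omega> p" using LO_lift_exists[OF P L'] by blast
  note fp = LO_lift[OF L' f]
  obtain G where G: "finite G" "G \<subseteq> I" "I = ideal_gen G"
    using noetherian_ring_finitely_generated[OF N I] by blast
  obtain s where s: "s \<in> I" "\<And>y. y \<in> I \<Longrightarrow> (1 - s) * y \<in> range f"
    using nakayama[OF I is_ideal_range_dual[OF f(1)] fp(2) G(1,2)] G(3) by blast
  have Qs: "(f, s) \<in> Qs sc"
    using s f(1) unfolding Qs_def by (auto simp: mult.commute)
  have "I = {f q + a * s |q a. True}"
  proof
    show "I \<subseteq> {f q + a * s |q a. True}"
    proof
      fix y assume y: "y \<in> I"
      then obtain q where "(1 - s) * y = f q" using s(2) by blast
      then have "y = f q + y * s" by (simp add: algebra_simps)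
      then show "y \<in> {f q + a * s |q a. True}" by blast
    qed
    show "{f q + a * s |q a. True} \<subseteq> I"
      using fp(1) s(1) I by (auto intro!: ideal_add ideal_mult_left)
  qed
  then have "chi_wit sc (I, \<omega>) (f, s)"
    unfolding chi_wit_def using Qs fp(1) f(2) s(1) by auto
  then show ?thesis using x by blast
qed

section \<open>Homotopy relations and induced maps\<close>

lemma htpy_rel_iff: "(x, y) \<in> htpy_rel X XT ev0 ev1 \<longleftrightarrow> x \<in> X \<and> y \<in> X \<and>
   equivclp (\<lambda>u v. u \<in> X \<and> v \<in> X \<and> (\<exists>H\<in>XT. ev0 H = u \<and> ev1 H = v)) x y"
  by (simp add: htpy_rel_def)

lemma htpy_equiv: "equiv X (htpy_rel X XT ev0 ev1)"
proof -
  let ?E = "\<lambda>u v. u \<in> X \<and> v \<in> X \<and> (\<exists>H\<in>XT. ev0 H = u \<and> ev1 H = v)"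
  have r: "refl_on X (htpy_rel X XT ev0 ev1)"
    unfolding refl_on_def htpy_rel_def by (auto simp: reflpD[OF reflp_equivclp])
  have s: "sym (htpy_rel X XT ev0 ev1)"
  proof (rule symI)
    fix x y assume "(x, y) \<in> htpy_rel X XT ev0 ev1"
    then show "(y, x) \<in> htpy_rel X XT ev0 ev1" unfolding htpy_rel_iff by (auto intro: equivclp_sym)
  qed
  have t: "trans (htpy_rel X XT ev0 ev1)"
  proof (rule transI)
    fix x y z assume "(x, y) \<in> htpy_rel X XT ev0 ev1" "(y, z) \<in> htpy_rel X XT ev0 ev1"
    then show "(x, z) \<in> htpy_rel X XT ev0 ev1" unfolding htpy_rel_iff
      using transpD[OF transp_equivclp, of ?E x y z] by blast
  qed
  have "htpy_rel X XT ev0 ev1 \<subseteq> X \<times> X" unfolding htpy_rel_def by auto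
  then show ?thesis using r s t by (simp add: equiv_def)
qed

lemma htpy_refl: "x \<in> X \<Longrightarrow> (x, x) \<in> htpy_rel X XT ev0 ev1"
  using htpy_equiv[of X XT ev0 ev1] unfolding equiv_def refl_on_def by auto

lemma htpy_sym: "(x, y) \<in> htpy_rel X XT ev0 ev1 \<Longrightarrow> (y, x) \<in> htpy_rel X XT ev0 ev1"
  using htpy_equiv[of X XT ev0 ev1] unfolding equiv_def sym_def by auto

lemma htpy_trans: "(x, y) \<in> htpy_rel X XT ev0 ev1 \<Longrightarrow> (y, z) \<in> htpy_rel X XT ev0 ev1 \<Longrightarrow> (x, z) \<in> htpy_rel X XT ev0 ev1"
  using htpy_equiv[of X XT ev0 ev1] unfolding equiv_def trans_def by blast

lemma htpy_edge: "H \<in> XT \<Longrightarrow> ev0 H \<in> X \<Longrightarrow> ev1 H \<in> X \<Longrightarrow> (ev0 H, ev1 H) \<in> htpy_rel X XT ev0 ev1"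
proof -
  assume a: "H \<in> XT" "ev0 H \<in> X" "ev1 H \<in> X"
  let ?E = "\<lambda>u v. u \<in> X \<and> v \<in> X \<and> (\<exists>H\<in>XT. ev0 H = u \<and> ev1 H = v)"
  have "symclp ?E (ev0 H) (ev1 H)" unfolding symclp_def using a by blast
  then have "(symclp ?E)\<^sup>*\<^sup>* (ev0 H) (ev1 H)" by (rule r_into_rtranclp)
  then show ?thesis unfolding htpy_rel_def equivclp_def using a by auto
qed

lemma htpy_map:
  assumes xy: "(x, y) \<in> htpy_rel X XT ev0 ev1"
    and S: "equiv Y S"
    and fX: "\<And>x. x \<in> X \<Longrightarrow> f x \<in> Y"
    and fE: "\<And>H. H \<in> XT \<Longrightarrow> ev0 H \<in> X \<Longrightarrow> ev1 H \<in> X \<Longrightarrow> (f (ev0 H), f (ev1 H)) \<in> S"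
  shows "(f x, f y) \<in> S"
proof -
  define E where "E = (\<lambda>u v. u \<in> X \<and> v \<in> X \<and> (\<exists>H\<in>XT. ev0 H = u \<and> ev1 H = v))"
  have x: "x \<in> X" and st: "(symclp E)\<^sup>*\<^sup>* x y" using xy unfolding htpy_rel_def equivclp_def E_def by auto
  from st show ?thesis
  proof (induction rule: rtranclp_induct)
    case base
    then show ?case using S fX[OF x] unfolding equiv_def refl_on_def by auto
  next
    case (step y z)
    have "(f y, f z) \<in> S"
      using step(2) unfolding symclp_def E_def
    proof
      assume "y \<in> X \<and> z \<in> X \<and> (\<exists>H\<in>XT. ev0 H = y \<and> ev1 H = z)"
      then show ?thesis using fE by blast
    next
      assume "z \<in> X \<and> y \<in> X \<and> (\<exists>H\<in>XT. ev0 H = z \<and> ev1 H = y)"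
      then have "(f z, f y) \<in> S" using fE by blast
      then show ?thesis using S unfolding equiv_def sym_def by blast
    qed
    then show ?case using step(3) S unfolding equiv_def trans_def by blast
  qed
qed

lemma htpy_compat:
  assumes S: "equiv Y S"
    and fX: "\<And>x. x \<in> X \<Longrightarrow> f x \<in> Y"
    and fE: "\<And>H. H \<in> XT \<Longrightarrow> ev0 H \<in> X \<Longrightarrow> ev1 H \<in> X \<Longrightarrow> (f (ev0 H), f (ev1 H)) \<in> S"
  shows "compat (htpy_rel X XT ev0 ev1) S f"
  unfolding compat_def
proof (intro allI impI)
  fix x y assume "(x, y) \<in> htpy_rel X XT ev0 ev1"
  then show "(f x, f y) \<in> S" by (rule htpy_map[OF _ S fX fE])
qed

lemma induced_class:
  assumes R: "equiv X R" and S: "equiv Y S" and c: "compat R S f" and x: "x \<in> X"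
  shows "induced S f (R``{x}) = S``{f x}"
proof -
  have "S``{f x'} = S``{f x}" if "x' \<in> R``{x}" for x'
  proof -
    have "(f x, f x') \<in> S" using c that unfolding compat_def by blast
    then show ?thesis using equiv_class_eq_iff[OF S] by blast
  qed
  moreover have "x \<in> R``{x}" using R x by (rule equiv_class_self)
  ultimately show ?thesis unfolding induced_def by blast
qed

lemma induced_in_quotient:
  assumes R: "equiv X R" and S: "equiv Y S" and f: "compat R S f" "\<And>x. x \<in> X \<Longrightarrow> f x \<in> Y"
    and C: "C \<in> X//R"
  shows "induced S f C \<in> Y//S"
  using C by (auto elim!: quotientE simp: induced_class[OF R S f(1)] intro!: quotientI f(2))

lemma induced_inverse:
  assumes R: "equiv X R" and S: "equiv Y S"
    and f: "compat R S f" "\<And>x. x \<in> X \<Longrightarrow> f x \<in> Y" and g: "compat S R g"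
    and gf: "\<And>x. x \<in> X \<Longrightarrow> (g (f x), x) \<in> R"
    and C: "C \<in> X//R"
  shows "induced R g (induced S f C) = C"
proof -
  obtain x where x: "x \<in> X" "C = R``{x}" using C by (auto elim: quotientE)
  have "induced R g (induced S f C) = R``{g (f x)}"
    using x by (simp add: induced_class[OF R S f(1)] induced_class[OF S R g f(2)])
  also have "\<dots> = C"
    using gf[OF x(1)] x(2) equiv_class_eq_iff[OF R] by blast
  finally show ?thesis .
qed

lemma induced_bij:
  assumes R: "equiv X R" and S: "equiv Y S"
    and f: "compat R S f" "\<And>x. x \<in> X \<Longrightarrow> f x \<in> Y"
    and g: "compat S R g" "\<And>y. y \<in> Y \<Longrightarrow> g y \<in> X"
    and gf: "\<And>x. x \<in> X \<Longrightarrow> (g (f x), x) \<in> R"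
    and fg: "\<And>y. y \<in> Y \<Longrightarrow> (f (g y), y) \<in> S"
  shows "bij_betw (induced S f) (X//R) (Y//S)"
proof (rule bij_betw_byWitness[where f' = "induced R g"])
  show "\<forall>C\<in>X//R. induced R g (induced S f C) = C"
    using induced_inverse[OF R S f g(1) gf] by blast
  show "\<forall>C\<in>Y//S. induced S f (induced R g C) = C"
    using induced_inverse[OF S R g f(1) fg] by blast
  show "induced S f ` (X//R) \<subseteq> Y//S"
    using induced_in_quotient[OF R S f] by blast
  show "induced R g ` (Y//S) \<subseteq> X//R"
    using induced_in_quotient[OF S R g] by blast
qed

lemma compat_comp: "compat R S f \<Longrightarrow> compat S T g \<Longrightarrow> compat R T (\<lambda>x. g (f x))"
  unfolding compat_def by blast

lemma induced_comp:
  assumes R: "equiv X R" and S: "equiv Y S" and T: "equiv Z T"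
    and f: "compat R S f" "\<And>x. x \<in> X \<Longrightarrow> f x \<in> Y" and g: "compat S T g"
    and C: "C \<in> X//R"
  shows "induced T (\<lambda>x. g (f x)) C = induced T g (induced S f C)"
  using C by (auto elim!: quotientE simp: induced_class[OF R T compat_comp[OF f(1) g]]
      induced_class[OF R S f(1)] induced_class[OF S T g f(2)])

lemma equiv_Qs_rel: "equiv (Qs sc) (Qs_rel sc)"
  unfolding Qs_rel_def by (rule htpy_equiv)

lemma equiv_LO_rel: "equiv (LO sc) (LO_rel sc)"
  unfolding LO_rel_def by (rule htpy_equiv)

lemma equiv_Qt_rel: "equiv (Qt sc) (Qt_rel sc)"
  unfolding Qt_rel_def by (rule htpy_equiv)

lemma equiv_Qt'_rel: "equiv (Qt' sc) (Qt'_rel sc)"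
  unfolding Qt'_rel_def by (rule htpy_equiv)

lemma spec_dual_dual:
  assumes F: "F \<in> dual (pscale sc)" and m: "module sc"
  shows "spec_dual t F \<in> dual sc"
proof (rule dualI[OF m])
  show "spec_dual t F (x + y) = spec_dual t F x + spec_dual t F y" for x y
    using dual_add[OF F, of "[:x:]" "[:y:]"] by (simp add: spec_dual_def)
  show "spec_dual t F (sc a x) = a * spec_dual t F x" for a x
    by (simp add: spec_dual_def pscale_const_const[OF m, symmetric] dual_scale[OF F])
qed

lemma spec_dual_range: assumes F: "F \<in> dual (pscale sc)" and m: "module sc"
  shows "poly (F Q) t \<in> range (spec_dual t F)"
  by (subst poly_dual_eval[OF F m]) (rule rangeI)

lemma mult_one_minus_add: fixes a d :: "'a::comm_ring_1"
  shows "(a + d) * (1 - (a + d)) = a * (1 - a) + d * (1 - a - a - d)"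
  by (simp add: algebra_simps)

lemma const_mult_one_minus: "[:s:] * (1 - [:s:]) = [:s * (1 - s::'a::comm_ring_1):]"
  by (rule poly_eqI) (simp add: mult_pCons_left coeff_pCons split: nat.split)

lemma spec_Qs_Qs:
  assumes H: "H \<in> Qs (pscale sc)" and m: "module sc"
  shows "spec_Qs t H \<in> Qs sc"
proof -
  obtain F S where HFS: "H = (F, S)" by (cases H)
  have F: "F \<in> dual (pscale sc)" and "S * (1 - S) \<in> range F" using H HFS by (auto simp: Qs_def)
  then obtain Q where Q: "S * (1 - S) = F Q" by blast
  have "poly S t * (1 - poly S t) = poly (F Q) t" by (simp flip: Q)
  then have "poly S t * (1 - poly S t) \<in> range (spec_dual t F)" using spec_dual_range[OF F m] by simp
  then show ?thesis using HFS spec_dual_dual[OF F m] by (simp add: spec_Qs_def Qs_def)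
qed

definition polys_over :: "'a::comm_ring_1 set \<Rightarrow> 'a poly set" where
  "polys_over R = {Q. \<forall>j. coeff Q j \<in> R}"

lemma is_ideal_polys_over:
  assumes R: "is_ideal R"
  shows "is_ideal (polys_over R)"
  unfolding is_ideal_def polys_over_def
  by (auto simp: ideal_0[OF R] ideal_add[OF R] coeff_mult intro!: ideal_sum[OF R] ideal_mult_left[OF R])

lemma monom_const_mult: "monom a j * [:b:] = monom (a * b) j"
  by (rule poly_eqI) (auto simp: coeff_monom_mult coeff_monom coeff_pCons mult.commute split: nat.split)

lemma monom_polys_over: "is_ideal R \<Longrightarrow> a \<in> R \<Longrightarrow> monom a j \<in> polys_over R"
  by (auto simp: polys_over_def coeff_monom ideal_0)

lemma const_polys_over: "is_ideal R \<Longrightarrow> a \<in> R \<Longrightarrow> [:a:] \<in> polys_over R"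
  by (auto simp: polys_over_def coeff_pCons ideal_0 split: nat.split)

lemma polys_over_ideal_gen:
  assumes G: "finite G0" "I \<subseteq> ideal_gen G0"
  shows "polys_over I \<subseteq> ideal_gen ((\<lambda>x. [:x:]) ` G0)"
proof
  fix Q assume Q: "Q \<in> polys_over I"
  have "coeff Q j \<in> ideal_gen G0" for j using Q G(2) unfolding polys_over_def by blast
  then have "\<exists>c. coeff Q j = (\<Sum>x\<in>G0. c x * x)" for j unfolding ideal_gen_iff .
  then have "\<forall>j. \<exists>c. coeff Q j = (\<Sum>x\<in>G0. c x * x)" by blast
  then have "\<exists>c. \<forall>j. coeff Q j = (\<Sum>x\<in>G0. c j x * x)" by (rule choice)
  then obtain c where c: "\<And>j. coeff Q j = (\<Sum>x\<in>G0. c j x * x)" by blast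
  have "Q = (\<Sum>j\<le>degree Q. monom (coeff Q j) j)" by (simp add: poly_as_sum_of_monoms)
  also have "\<dots> = (\<Sum>j\<le>degree Q. \<Sum>x\<in>G0. monom (c j x) j * [:x:])"
    by (simp only: c monom_sum monom_const_mult)
  also have "\<dots> \<in> ideal_gen ((\<lambda>x. [:x:]) ` G0)"
    by (intro ideal_sum[OF is_ideal_ideal_gen] ideal_mult_left[OF is_ideal_ideal_gen] ideal_gen_base)
      (use G(1) in auto)
  finally show "Q \<in> ideal_gen ((\<lambda>x. [:x:]) ` G0)" .
qed

lemma polys_over_ideal_sq:
  assumes R: "is_ideal R" and Q: "\<forall>j. coeff Q j \<in> ideal_sq R"
  shows "Q \<in> ideal_sq (polys_over R)"
proof -
  have PI: "is_ideal (polys_over R)" by (rule is_ideal_polys_over[OF R])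
  have "monom (coeff Q j) j \<in> ideal_sq (polys_over R)" for j
  proof -
    obtain n :: nat and x y where xy: "coeff Q j = (\<Sum>i<n. x i * y i)" "\<forall>i<n. x i \<in> R \<and> y i \<in> R"
      using Q unfolding ideal_sq_iff by blast
    have "monom (coeff Q j) j = (\<Sum>i<n. monom (x i) j * [:y i:])"
      by (simp only: xy monom_sum monom_const_mult)
    also have "\<dots> \<in> ideal_sq (polys_over R)"
      by (intro ideal_sum[OF is_ideal_ideal_sq[OF PI]] ideal_sq_mult monom_polys_over const_polys_over R)
        (use xy in auto)
    finally show ?thesis .
  qed
  then have "(\<Sum>j\<le>degree Q. monom (coeff Q j) j) \<in> ideal_sq (polys_over R)"
    by (intro ideal_sum[OF is_ideal_ideal_sq[OF PI]])
  then show ?thesis by (simp add: poly_as_sum_of_monoms)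
qed

lemma Qs_rel_edge:
  assumes H: "H \<in> Qs (pscale sc)" and m: "module sc"
  shows "(spec_Qs 0 H, spec_Qs 1 H) \<in> Qs_rel sc"
  unfolding Qs_rel_def
  by (rule htpy_edge[where ?ev0.0 = "spec_Qs 0" and ?ev1.0 = "spec_Qs 1", OF H spec_Qs_Qs[OF H m] spec_Qs_Qs[OF H m]])

section \<open>Witnesses of one local orientation are homotopic\<close>

lemma Qs_rel_sym: "(x, y) \<in> Qs_rel sc \<Longrightarrow> (y, x) \<in> Qs_rel sc"
  unfolding Qs_rel_def by (rule htpy_sym)

lemma Qs_rel_trans: "(x, y) \<in> Qs_rel sc \<Longrightarrow> (y, z) \<in> Qs_rel sc \<Longrightarrow> (x, z) \<in> Qs_rel sc"
  unfolding Qs_rel_def by (rule htpy_trans)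

lemma chi_witD:
  assumes "chi_wit sc (I, \<omega>) (f, s)"
  shows "f \<in> dual sc" "(f, s) \<in> Qs sc" "\<And>p. f p \<in> I" "\<And>p. f p \<in> \<omega> p" "s \<in> I"
    "I = {f q + a * s |q a. True}"
  using assms unfolding chi_wit_def Qs_def by auto

lemma chi_wit_Qs: "chi_wit sc x a \<Longrightarrow> a \<in> Qs sc"
  by (cases x, cases a) (simp add: chi_wit_def)

definition linear_htpy :: "('b::zero \<Rightarrow> 'a::comm_ring_1) \<Rightarrow> ('b \<Rightarrow> 'a) \<Rightarrow> 'b poly \<Rightarrow> 'a poly" where
  "linear_htpy f g Q = pext f Q + monom 1 1 * pext (\<lambda>p. g p - f p) Q"

lemma linear_htpy:
  assumes f: "f \<in> dual sc" and g: "g \<in> dual sc"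
  shows "linear_htpy f g \<in> dual (pscale sc)" "spec_dual 0 (linear_htpy f g) = f"
    "spec_dual 1 (linear_htpy f g) = g"
proof -
  have m: "module sc" using dual_module[OF f] .
  have h: "(\<lambda>p. g p - f p) \<in> dual sc"
    by (rule dualI[OF m])
      (simp_all add: dual_add[OF f] dual_add[OF g] dual_scale[OF f] dual_scale[OF g] algebra_simps)
  note F = pext_dual[OF f] and H = pext_dual[OF h]
  show "linear_htpy f g \<in> dual (pscale sc)"
    unfolding linear_htpy_def
    by (rule dualI[OF module_pscale[OF m]])
      (simp_all add: dual_add[OF F] dual_add[OF H] dual_scale[OF F] dual_scale[OF H] algebra_simps)
  show "spec_dual 0 (linear_htpy f g) = f" "spec_dual 1 (linear_htpy f g) = g"
    by (simp_all add: fun_eq_iff spec_dual_def linear_htpy_def poly_monom dual_zero[OF f] dual_zero[OF g]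
        pext_const[of f, OF dual_zero[OF f]] pext_const[of "\<lambda>p. g p - f p", OF dual_zero[OF h]])
qed

text \<open>If \<open>f\<close> and \<open>g\<close> both lift \<open>\<omega>\<close>, the interpolation \<open>f + T (g - f)\<close> covers \<open>I[T]\<close> modulo \<open>I[T]\<^sup>2\<close>,
  since \<open>g - f\<close> takes values in \<open>I\<^sup>2\<close>.\<close>
lemma LO_cover_polys_over:
  assumes L: "(I, \<omega>) \<in> LO sc" and f: "f \<in> dual sc" "\<And>p. f p \<in> \<omega> p"
    and g: "g \<in> dual sc" "\<And>p. g p \<in> \<omega> p"
  shows "\<forall>Y\<in>polys_over I. \<exists>k\<in>range (linear_htpy f g). \<exists>v\<in>ideal_sq (polys_over I). Y = k + v"
proof
  fix Y assume Y: "Y \<in> polys_over I"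
  have I: "is_ideal I" using LO_D(1)[OF L] .
  have sqI: "is_ideal (ideal_sq I)" by (rule is_ideal_ideal_sq[OF I])
  have "\<exists>p. coeff Y j - f p \<in> ideal_sq I" for j
  proof -
    have "coeff Y j \<in> I" using Y by (simp add: polys_over_def)
    then obtain k v where "k \<in> range f" "v \<in> ideal_sq I" "coeff Y j = k + v"
      using LO_lift(2)[OF L f] by blast
    then show ?thesis by (metis add_diff_cancel_left' rangeE)
  qed
  then obtain p where p: "\<And>j. coeff Y j - f (p j) \<in> ideal_sq I" by metis
  define P where "P = (\<Sum>j\<le>degree Y. monom (p j) j)"
  have coeff_P: "coeff P j = (if j \<le> degree Y then p j else 0)" for j
    by (simp add: P_def coeff_sum coeff_monom sum.delta)
  have "coeff (Y - linear_htpy f g P) j \<in> ideal_sq I" for j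
  proof -
    have "coeff Y j - f (coeff P j) \<in> ideal_sq I"
      using p[of j] by (cases "j \<le> degree Y")
        (auto simp: coeff_P coeff_eq_0 dual_zero[OF f(1)] ideal_sq_0)
    moreover have "g q - f q \<in> ideal_sq I" for q
      by (rule coset_mem_diff[OF I LO_D(2)[OF L] f(2) g(2)])
    then have "coeff (monom 1 1 * pext (\<lambda>p. g p - f p) P) j \<in> ideal_sq I"
      by (cases j)
        (simp_all add: coeff_monom_mult coeff_pext dual_zero[OF f(1)] dual_zero[OF g(1)] ideal_sq_0)
    ultimately have "(coeff Y j - f (coeff P j)) - coeff (monom 1 1 * pext (\<lambda>p. g p - f p) P) j \<in> ideal_sq I"
      by (rule ideal_diff[OF sqI])
    then show ?thesis
      by (simp add: linear_htpy_def coeff_pext[of f, OF dual_zero[OF f(1)]] diff_diff_eq)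
  qed
  then have "Y - linear_htpy f g P \<in> ideal_sq (polys_over I)"
    by (intro polys_over_ideal_sq[OF I]) blast
  then show "\<exists>k\<in>range (linear_htpy f g). \<exists>v\<in>ideal_sq (polys_over I). Y = k + v"
    by (intro bexI[of _ "linear_htpy f g P"] bexI[of _ "Y - linear_htpy f g P"]) auto
qed

lemma Qs_rel_translate:
  assumes f: "f \<in> dual sc" and s: "(f, s) \<in> Qs sc" and d: "t - s \<in> range f"
  shows "((f, s), (f, t)) \<in> Qs_rel sc"
proof -
  have m: "module sc" using dual_module[OF f] .
  have R: "is_ideal (range f)" by (rule is_ideal_range_dual[OF f])
  define d where "d = t - s"
  define D where "D = [:0, d:]"
  define S where "S = [:s:] + D"
  have "S * (1 - S) = [:s * (1 - s):] + D * (1 - [:s:] - [:s:] - D)"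
    unfolding S_def mult_one_minus_add const_mult_one_minus ..
  moreover have "[:s * (1 - s):] \<in> polys_over (range f)" using s R by (intro const_polys_over)
    (auto simp: Qs_def)
  moreover have "D * (1 - [:s:] - [:s:] - D) \<in> polys_over (range f)"
  proof -
    have "D \<in> polys_over (range f)" using d R unfolding D_def d_def polys_over_def
      by (auto simp: coeff_pCons ideal_0 split: nat.split)
    then show ?thesis using is_ideal_polys_over[OF R] by (simp add: ideal_mult_right)
  qed
  ultimately have "S * (1 - S) \<in> polys_over (range f)" using is_ideal_polys_over[OF R]
    by (simp add: ideal_add)
  then have "S * (1 - S) \<in> range (pext f)" using range_pext[OF f] unfolding polys_over_def by blast
  then have H: "(pext f, S) \<in> Qs (pscale sc)" using pext_dual[OF f] by (simp add: Qs_def)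
  have "spec_Qs 0 (pext f, S) = (f, s)" "spec_Qs 1 (pext f, S) = (f, t)"
    by (simp_all add: spec_Qs_def spec_dual_pext[OF f] S_def D_def d_def)
  then show ?thesis using Qs_rel_edge[OF H m] by simp
qed

lemma identity_mod_unique:
  assumes R: "is_ideal R" and sI: "s \<in> I" and tI: "t \<in> I"
    and hs: "\<And>y. y \<in> I \<Longrightarrow> (1 - s) * y \<in> R" and ht: "\<And>y. y \<in> I \<Longrightarrow> (1 - t) * y \<in> R"
  shows "s - t \<in> R"
proof -
  have "s - t = (1 - t) * s - (1 - s) * t" by (simp add: algebra_simps)
  then show ?thesis using ht[OF sI] hs[OF tI] ideal_diff[OF R] by simp
qed

lemma chi_wit_identity_mod_range:
  assumes w: "chi_wit sc (I, \<omega>) (f, s)" and I: "is_ideal I"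
  shows "\<And>y. y \<in> I \<Longrightarrow> (1 - s) * y \<in> range f"
proof -
  fix y assume y: "y \<in> I"
  have f: "f \<in> dual sc" and ss: "s * (1 - s) \<in> range f" and Ieq: "I = {f q + a * s |q a. True}"
    using w by (auto simp: chi_wit_def Qs_def)
  obtain q a where "y = f q + a * s" using y Ieq by blast
  then have "(1 - s) * y = (1 - s) * f q + a * (s * (1 - s))" by (simp add: algebra_simps)
  moreover have "f q \<in> range f" by simp
  ultimately show "(1 - s) * y \<in> range f" using ss is_ideal_range_dual[OF f]
    by (metis ideal_add ideal_mult_left)
qed

lemma Qs_rel_identity_mod_range:
  assumes f: "f \<in> dual sc" and s: "(f, s) \<in> Qs sc" "s \<in> I" "\<And>y. y \<in> I \<Longrightarrow> (1 - s) * y \<in> range f"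
    and t: "t \<in> I" "\<And>y. y \<in> I \<Longrightarrow> (1 - t) * y \<in> range f"
  shows "((f, s), (f, t)) \<in> Qs_rel sc"
  using identity_mod_unique[OF is_ideal_range_dual[OF f] t(1) s(2) t(2) s(3)]
  by (rule Qs_rel_translate[OF f s(1)])

lemma nakayama_polys_over:
  assumes N: "noetherian_ring TYPE('a::comm_ring_1)" and I: "is_ideal (I :: 'a set)"
    and K: "is_ideal K" and cov: "\<forall>Y\<in>polys_over I. \<exists>k\<in>K. \<exists>v\<in>ideal_sq (polys_over I). Y = k + v"
  shows "\<exists>S\<in>polys_over I. \<forall>Y\<in>polys_over I. (1 - S) * Y \<in> K"
proof -
  obtain G where G: "finite G" "G \<subseteq> I" "I = ideal_gen G"
    using noetherian_ring_finitely_generated[OF N I] by blast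
  have "finite ((\<lambda>x. [:x:]) ` G)" "(\<lambda>x. [:x:]) ` G \<subseteq> polys_over I"
    "polys_over I \<subseteq> ideal_gen ((\<lambda>x. [:x:]) ` G)"
    using G const_polys_over[OF I] polys_over_ideal_gen[of G I] by auto
  then show ?thesis by (rule nakayama[OF is_ideal_polys_over[OF I] K cov])
qed

text \<open>Nakayama's lemma for \<open>I[T]\<close> turns the interpolation between the two lifts into a homotopy
  in \<open>Qs (P[T])\<close>; its ends agree with the given witnesses by \<open>Qs_rel_identity_mod_range\<close>.\<close>
lemma chi_wit_Qs_rel:
  fixes sc :: "'a::comm_ring_1 \<Rightarrow> 'b::ab_group_add \<Rightarrow> 'b"
  assumes N: "noetherian_ring TYPE('a)" and L: "x \<in> LO sc"
    and wa: "chi_wit sc x a" and wb: "chi_wit sc x b"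
  shows "(a, b) \<in> Qs_rel sc"
proof -
  obtain I \<omega> f s g t where x: "x = (I, \<omega>)" and a: "a = (f, s)" and b: "b = (g, t)"
    by (metis prod.exhaust)
  note L = L[unfolded x] and wf = chi_witD[OF wa[unfolded x a]] and wg = chi_witD[OF wb[unfolded x b]]
  have I: "is_ideal I" using LO_D(1)[OF L] .
  have m: "module sc" using dual_module[OF wf(1)] .
  define F where "F = linear_htpy f g"
  note F = linear_htpy[OF wf(1) wg(1), folded F_def]
  have "\<exists>S\<in>polys_over I. \<forall>Y\<in>polys_over I. (1 - S) * Y \<in> range F"
    by (rule nakayama_polys_over[OF N I is_ideal_range_dual[OF F(1)]
        LO_cover_polys_over[OF L wf(1,4) wg(1,4), folded F_def]])
  then obtain S where S: "S \<in> polys_over I" "\<And>Y. Y \<in> polys_over I \<Longrightarrow> (1 - S) * Y \<in> range F"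
    by blast
  have "(F, S) \<in> Qs (pscale sc)"
    using S F(1) unfolding Qs_def by (auto simp: mult.commute)
  then have edge: "((f, poly S 0), (g, poly S 1)) \<in> Qs_rel sc"
    using Qs_rel_edge[OF _ m] by (force simp: spec_Qs_def F(2,3))
  have S_I: "poly S r \<in> I" for r
    using S(1) unfolding poly_altdef polys_over_def
      by (intro ideal_sum[OF I] ideal_mult_right[OF I]) simp
  have S_identity: "(1 - poly S r) * y \<in> range (spec_dual r F)" if y: "y \<in> I" for y r
  proof -
    obtain Q where "(1 - S) * [:y:] = F Q"
      using S(2) const_polys_over[OF I y] by blast
    then have "(1 - poly S r) * y = poly (F Q) r"
      by (metis poly_pCons poly_0 mult_zero_right add_0_right poly_diff poly_1 poly_mult)
    then show ?thesis using spec_dual_range[OF F(1) m] by simp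
  qed
  have "((f, s), (f, poly S 0)) \<in> Qs_rel sc"
    using S_identity[of _ 0] chi_wit_identity_mod_range[OF wa[unfolded x a] I]
    by (intro Qs_rel_identity_mod_range[OF wf(1,2,5)]) (simp_all add: S_I F(2))
  moreover have "((g, t), (g, poly S 1)) \<in> Qs_rel sc"
    using S_identity[of _ 1] chi_wit_identity_mod_range[OF wb[unfolded x b] I]
    by (intro Qs_rel_identity_mod_range[OF wg(1,2,5)]) (simp_all add: S_I F(3))
  ultimately show ?thesis
    using edge a b by (blast intro: Qs_rel_trans Qs_rel_sym)
qed

lemma is_ideal_span:
  assumes f: "f \<in> dual sc"
  shows "is_ideal {f q + a * s |q a. True}"
  unfolding is_ideal_def
proof (intro conjI ballI allI)
  show "0 \<in> {f q + a * s |q a. True}"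
    by (rule CollectI, rule exI[of _ 0], rule exI[of _ 0]) (simp add: dual_zero[OF f])
  show "x + y \<in> {f q + a * s |q a. True}"
    if xy: "x \<in> {f q + a * s |q a. True}" "y \<in> {f q + a * s |q a. True}" for x y
  proof -
    obtain q a q' a' where "x = f q + a * s" "y = f q' + a' * s" using xy by blast
    then have "x + y = f (q + q') + (a + a') * s" by (simp add: dual_add[OF f] algebra_simps)
    then show ?thesis by blast
  qed
  show "b * x \<in> {f q + a * s |q a. True}" if xy: "x \<in> {f q + a * s |q a. True}" for b x
  proof -
    obtain q a where "x = f q + a * s" using xy by blast
    then have "b * x = f (sc b q) + (b * a) * s" by (simp add: dual_scale[OF f] algebra_simps)
    then show ?thesis by blast
  qed
qed

lemma span_range_mem: "f p \<in> {f q + a * (s::'a::comm_ring_1) |q a. True}"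
  by (intro CollectI exI[of _ p] exI[of _ 0] conjI) simp_all

lemma span_gen_mem: "f \<in> dual sc \<Longrightarrow> s \<in> {f q + a * s |q a. True}"
  by (auto intro!: exI[of _ 0] exI[of _ 1] simp: dual_zero)

lemma poly_image_span:
  assumes F: "F \<in> dual (pscale sc)" and m: "module sc"
  shows "(\<lambda>g. poly g t) ` {F q + a * S |q a. True} = {spec_dual t F q + a * poly S t |q a. True}"
proof
  show "(\<lambda>g. poly g t) ` {F q + a * S |q a. True} \<subseteq> {spec_dual t F q + a * poly S t |q a. True}"
  proof
    fix y assume "y \<in> (\<lambda>g. poly g t) ` {F q + a * S |q a. True}"
    then obtain Q B where "y = poly (F Q + B * S) t" by blast
    then have "y = spec_dual t F (peval sc t Q) + poly B t * poly S t"
      by (simp add: poly_dual_eval[OF F m])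
    then show "y \<in> {spec_dual t F q + a * poly S t |q a. True}" by blast
  qed
  show "{spec_dual t F q + a * poly S t |q a. True} \<subseteq> (\<lambda>g. poly g t) ` {F q + a * S |q a. True}"
  proof
    fix y assume "y \<in> {spec_dual t F q + a * poly S t |q a. True}"
    then obtain q a where "y = spec_dual t F q + a * poly S t" by blast
    then have "y = poly (F [:q:] + [:a:] * S) t" by (simp add: spec_dual_def)
    then show "y \<in> (\<lambda>g. poly g t) ` {F q + a * S |q a. True}" by blast
  qed
qed

lemma poly_ideal_sq:
  assumes "e \<in> ideal_sq J"
  shows "poly e t \<in> ideal_sq ((\<lambda>f. poly f t) ` J)"
proof -
  obtain n :: nat and x y where xy: "e = (\<Sum>i<n. x i * y i)" "\<forall>i<n. x i \<in> J \<and> y i \<in> J"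
    using assms unfolding ideal_sq_iff by blast
  have "poly e t = (\<Sum>i<n. poly (x i) t * poly (y i) t)" by (simp add: xy poly_sum)
  moreover have "\<forall>i<n. poly (x i) t \<in> (\<lambda>f. poly f t) ` J \<and> poly (y i) t \<in> (\<lambda>f. poly f t) ` J"
    using xy by auto
  ultimately show ?thesis unfolding ideal_sq_iff
    by (intro exI[of _ n] exI[of _ "\<lambda>i. poly (x i) t"] exI[of _ "\<lambda>i. poly (y i) t"]) auto
qed

lemma chi_wit_spec:
  assumes m: "module sc" and w: "chi_wit (pscale sc) X W"
  shows "chi_wit sc (spec_LO t X) (spec_Qs t W)"
proof -
  obtain J \<Omega> F S where X: "X = (J, \<Omega>)" and W: "W = (F, S)" by (metis prod.exhaust)
  note w = chi_witD[OF w[unfolded X W]]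
  define Jt where "Jt = (\<lambda>g. poly g t) ` J"
  have "spec_LO t X = (Jt, \<lambda>q. {poly g t + y |g y. g \<in> \<Omega> [:q:] \<and> y \<in> ideal_sq Jt})"
    by (simp add: X spec_LO_def Jt_def Let_def)
  moreover have "spec_Qs t W = (spec_dual t F, poly S t)" by (simp add: W spec_Qs_def)
  moreover have "spec_dual t F p \<in> {poly g t + y |g y. g \<in> \<Omega> [:p:] \<and> y \<in> ideal_sq Jt}" for p
    unfolding spec_dual_def
    by (intro CollectI exI[of _ "F [:p:]"] exI[of _ 0] conjI) (simp_all add: ideal_sq_0 w(4))
  moreover have "Jt = {spec_dual t F q + a * poly S t |q a. True}"
    unfolding Jt_def w(6) by (rule poly_image_span[OF w(1) m])
  ultimately show ?thesis
    unfolding chi_wit_def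
      using spec_Qs_Qs[OF w(2) m, of t] span_range_mem[of "spec_dual t F" _ "poly S t"]
      span_gen_mem[OF spec_dual_dual[OF w(1) m], of "poly S t"]
    by (simp add: spec_Qs_def)
qed

lemma eta'_eq: "eta' (f, s) = ({f q + a * s |q a. True}, \<lambda>p. (+) (f p) ` ideal_sq {f q + a * s |q a. True})"
  by (simp add: eta'_def Let_def)

lemma eta'_LO:
  assumes "a \<in> Qs sc"
  shows "eta' a \<in> LO sc"
proof -
  obtain f s where a: "a = (f, s)" by (cases a)
  have f: "f \<in> dual sc" and ss: "s * (1 - s) \<in> range f" using assms by (auto simp: a Qs_def)
  define I where "I = {f q + a * s |q a. True}"
  have I: "is_ideal I" unfolding I_def by (rule is_ideal_span[OF f])
  have sqI: "is_ideal (ideal_sq I)" by (rule is_ideal_ideal_sq[OF I])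
  have fI: "f p \<in> I" for p unfolding I_def by (rule span_range_mem)
  have sI: "s \<in> I" unfolding I_def by (rule span_gen_mem[OF f])
  have "(I, \<lambda>p. (+) (f p) ` ideal_sq I) \<in> LO sc"
    unfolding LO_def
  proof (clarify, intro conjI allI impI ballI)
    show "is_ideal I" by fact
    show "(+) (f p) ` ideal_sq I \<in> quot_sq I" for p unfolding quot_sq_def using fI by blast
    show "x + y \<in> (+) (f (p + q)) ` ideal_sq I" if xy: "x \<in> (+) (f p) ` ideal_sq I" "y \<in> (+) (f q) ` ideal_sq I" for p q x y
    proof -
      obtain e e' where "e \<in> ideal_sq I" "e' \<in> ideal_sq I" "x = f p + e" "y = f q + e'" using xy by blast
      then show ?thesis using ideal_add[OF sqI]
        by (auto simp: dual_add[OF f] algebra_simps intro!: image_eqI[of _ _ "e + e'"])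
    qed
    show "a * x \<in> (+) (f (sc a p)) ` ideal_sq I" if xy: "x \<in> (+) (f p) ` ideal_sq I" for a p x
    proof -
      obtain e where e: "e \<in> ideal_sq I" "x = f p + e" using xy by blast
      have "a * e \<in> ideal_sq I" by (rule ideal_mult_left[OF sqI e(1)])
      moreover have "a * x = f (sc a p) + a * e" using e(2) by (simp add: dual_scale[OF f] algebra_simps)
      ultimately show ?thesis by blast
    qed
    show "\<exists>p. x \<in> (+) (f p) ` ideal_sq I" if xy: "x \<in> I" for x
    proof -
      obtain q a where x: "x = f q + a * s" using xy unfolding I_def by blast
      obtain p0 where p0: "f p0 = s * (1 - s)" using ss by (metis rangeE)
      have "(a * s) * s \<in> ideal_sq I" using sI I by (intro ideal_sq_mult ideal_mult_left)
      moreover have "x = f (q + sc a p0) + (a * s) * s"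
        by (simp add: x dual_add[OF f] dual_scale[OF f] p0 algebra_simps)
      ultimately show ?thesis by blast
    qed
  qed
  then show ?thesis by (simp add: a eta'_eq I_def)
qed

lemma chi_wit_eta':
  assumes "a \<in> Qs sc"
  shows "chi_wit sc (eta' a) a"
proof -
  obtain f s where a: "a = (f, s)" by (cases a)
  have "f p \<in> (+) (f p) ` ideal_sq I" for p I
    using ideal_sq_0 by (metis add_0_right image_eqI)
  then show ?thesis
    using assms span_range_mem[of f] span_gen_mem[of f sc s]
    by (simp add: a eta'_eq chi_wit_def Qs_def)
qed

lemma eta'_chi_wit:
  assumes L: "x \<in> LO sc" and w: "chi_wit sc x a"
  shows "eta' a = x"
proof -
  obtain I \<omega> f s where x: "x = (I, \<omega>)" and a: "a = (f, s)" by (metis prod.exhaust)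
  note w = chi_witD[OF w[unfolded x a]]
  have "\<omega> p = (+) (f p) ` ideal_sq I" for p
    by (rule coset_eq[OF LO_D(1,2)[OF L[unfolded x]] w(4)])
  then show ?thesis using w(6) by (simp add: x a eta'_eq[of f s, folded w(6)] fun_eq_iff)
qed

lemma poly_image_coset:
  assumes I: "is_ideal ((\<lambda>f. poly f t) ` J)"
  shows "{poly f t + y |f y. f \<in> (+) c ` ideal_sq J \<and> y \<in> ideal_sq ((\<lambda>f. poly f t) ` J)}
    = (+) (poly c t) ` ideal_sq ((\<lambda>f. poly f t) ` J)" (is "?L = ?R")
proof
  have sq: "is_ideal (ideal_sq ((\<lambda>f. poly f t) ` J))" by (rule is_ideal_ideal_sq[OF I])
  show "?L \<subseteq> ?R"
  proof
    fix z assume "z \<in> ?L"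
    then obtain e y where ey: "e \<in> ideal_sq J" "y \<in> ideal_sq ((\<lambda>f. poly f t) ` J)"
      "z = poly (c + e) t + y" by blast
    have "poly e t + y \<in> ideal_sq ((\<lambda>f. poly f t) ` J)"
      using poly_ideal_sq[OF ey(1)] ey(2) ideal_add[OF sq] by blast
    moreover have "z = poly c t + (poly e t + y)" using ey(3) by simp
    ultimately show "z \<in> ?R" by blast
  qed
  show "?R \<subseteq> ?L"
  proof
    fix z assume "z \<in> ?R"
    then obtain y where "y \<in> ideal_sq ((\<lambda>f. poly f t) ` J)" "z = poly c t + y" by blast
    moreover have "c \<in> (+) c ` ideal_sq J" using ideal_sq_0 by (metis add_0_right image_eqI)
    ultimately show "z \<in> ?L" by blast
  qed
qed

lemma spec_LO_eta':
  assumes H: "H \<in> Qs (pscale sc)" and m: "module sc"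
  shows "spec_LO t (eta' H) = eta' (spec_Qs t H)"
proof -
  obtain F S where FS: "H = (F, S)" by (cases H)
  have F: "F \<in> dual (pscale sc)" using H by (simp add: FS Qs_def)
  define J where "J = {F q + a * S |q a. True}"
  have JI: "(\<lambda>f. poly f t) ` J = {spec_dual t F q + a * poly S t |q a. True}"
    unfolding J_def by (rule poly_image_span[OF F m])
  have I: "is_ideal ((\<lambda>f. poly f t) ` J)"
    unfolding JI by (rule is_ideal_span[OF spec_dual_dual[OF F m]])
  have "spec_LO t (eta' H) = ((\<lambda>f. poly f t) ` J,
      \<lambda>q. {poly f t + y |f y. f \<in> (+) (F [:q:]) ` ideal_sq J \<and> y \<in> ideal_sq ((\<lambda>f. poly f t) ` J)})"
    by (simp add: FS eta'_eq J_def spec_LO_def Let_def)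
  also have "\<dots> = eta' (spec_Qs t H)"
    unfolding poly_image_coset[OF I] by (simp add: JI FS spec_Qs_def eta'_eq spec_dual_def)
  finally show ?thesis .
qed

lemma compat_eta':
  assumes m: "module sc"
  shows "compat (Qs_rel sc) (LO_rel sc) eta'"
  unfolding Qs_rel_def
proof (rule htpy_compat[OF equiv_LO_rel eta'_LO])
  fix H assume H: "H \<in> Qs (pscale sc)" and e: "spec_Qs 0 H \<in> Qs sc" "spec_Qs 1 H \<in> Qs sc"
  have "(spec_LO 0 (eta' H), spec_LO 1 (eta' H)) \<in> LO_rel sc"
    unfolding LO_rel_def
    by (rule htpy_edge[OF eta'_LO[OF H]]) (simp_all add: spec_LO_eta'[OF H m] eta'_LO e)
  then show "(eta' (spec_Qs 0 H), eta' (spec_Qs 1 H)) \<in> LO_rel sc"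
    by (simp add: spec_LO_eta'[OF H m])
qed

lemma nu_Qs: "x \<in> Qt sc \<Longrightarrow> nu x \<in> Qs sc"
proof -
  assume x: "x \<in> Qt sc"
  obtain f p s where xx: "x = (f, p, s)" by (cases x)
  then have "f \<in> dual sc" "f p + s * (s - 1) = 0" using x by (auto simp: Qt_def)
  moreover have "s * (1 - s) = f p" using \<open>f p + s * (s - 1) = 0\<close>
    by (simp add: algebra_simps eq_neg_iff_add_eq_0[symmetric])
  ultimately show ?thesis by (auto simp: nu_def xx Qs_def)
qed

lemma spec_Qt_Qt:
  assumes H: "H \<in> Qt (pscale sc)" and m: "module sc"
  shows "spec_Qt sc t H \<in> Qt sc"
proof -
  obtain F P S where HH: "H = (F, P, S)" by (cases H)
  have F: "F \<in> dual (pscale sc)" and e: "F P + S * (S - 1) = 0" using H HH by (auto simp: Qt_def)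
  have "poly (F P + S * (S - 1)) t = 0" using e by simp
  then have "spec_dual t F (peval sc t P) + poly S t * (poly S t - 1) = 0"
    by (simp add: poly_dual_eval[OF F m])
  then show ?thesis using spec_dual_dual[OF F m] by (simp add: HH spec_Qt_def Qt_def)
qed

lemma Qt_rel_edge:
  assumes H: "H \<in> Qt (pscale sc)" and m: "module sc"
  shows "(spec_Qt sc 0 H, spec_Qt sc 1 H) \<in> Qt_rel sc"
  unfolding Qt_rel_def
  by (rule htpy_edge[where ?ev0.0 = "spec_Qt sc 0" and ?ev1.0 = "spec_Qt sc 1", OF H spec_Qt_Qt[OF H m] spec_Qt_Qt[OF H m]])

lemma Qt'_rel_edge:
  assumes H: "H \<in> Qt' (pscale sc)" and e0: "spec_Qt sc 0 H \<in> Qt' sc" and e1: "spec_Qt sc 1 H \<in> Qt' sc"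
  shows "(spec_Qt sc 0 H, spec_Qt sc 1 H) \<in> Qt'_rel sc"
  unfolding Qt'_rel_def
  by (rule htpy_edge[where ?ev0.0 = "spec_Qt sc 0" and ?ev1.0 = "spec_Qt sc 1", OF H e0 e1])

lemma Qt_rel_sym: "(x, y) \<in> Qt_rel sc \<Longrightarrow> (y, x) \<in> Qt_rel sc"
  unfolding Qt_rel_def by (rule htpy_sym)

lemma Qt_rel_trans: "(x, y) \<in> Qt_rel sc \<Longrightarrow> (y, z) \<in> Qt_rel sc \<Longrightarrow> (x, z) \<in> Qt_rel sc"
  unfolding Qt_rel_def by (rule htpy_trans)

lemma peval_linear:
  assumes m: "module sc"
  shows "peval sc 0 [:p, d:] = p" "peval sc 1 [:p, d:] = p + d"
proof -
  have "degree [:p, d:] \<le> 1" by (simp add: degree_pCons_eq_if)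
  then show "peval sc 0 [:p, d:] = p" "peval sc 1 [:p, d:] = p + d"
    by (simp_all add: peval_le[OF m] module.scale_one[OF m] module.scale_zero_left[OF m])
qed

lemma Qt_rel_change_point:
  assumes x: "(f, p, s) \<in> Qt sc" and y: "(f, p', s) \<in> Qt sc"
  shows "((f, p, s), (f, p', s)) \<in> Qt_rel sc"
proof -
  have f: "f \<in> dual sc" and e: "f p + s * (s - 1) = 0" "f p' + s * (s - 1) = 0" using x y
    by (auto simp: Qt_def)
  have m: "module sc" using dual_module[OF f] .
  define P where "P = [:p, p' - p:]"
  have z: "f 0 = 0" by (rule dual_zero[OF f])
  have fpp: "f p' = f p" using e by (metis add_right_cancel)
  have "pext f P + [:s:] * ([:s:] - 1) = 0"
  proof (rule poly_eqI)
    fix n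
    have sq: "[:s:] * ([:s:] - 1) = [:s * (s - 1):]"
      by (rule poly_eqI) (simp add: mult_pCons_left coeff_pCons split: nat.split)
    show "coeff (pext f P + [:s:] * ([:s:] - 1)) n = coeff 0 n"
      unfolding sq using e
      by (cases n)
        (auto simp: coeff_pext[of f, OF z] P_def dual_diff[OF f] coeff_pCons z fpp split: nat.split)
  qed
  then have H: "(pext f, P, [:s:]) \<in> Qt (pscale sc)" using pext_dual[OF f] by (simp add: Qt_def)
  have "spec_Qt sc 0 (pext f, P, [:s:]) = (f, p, s)" "spec_Qt sc 1 (pext f, P, [:s:]) = (f, p', s)"
    by (simp_all add: spec_Qt_def spec_dual_pext[OF f] P_def peval_linear[OF m])
  then show ?thesis using Qt_rel_edge[OF H m] by simp
qed

definition nu_section :: "('m \<Rightarrow> 'r::comm_ring_1) \<times> 'r \<Rightarrow> ('m \<Rightarrow> 'r) \<times> 'm \<times> 'r" where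
  "nu_section = (\<lambda>(f, s). (f, SOME p. f p + s * (s - 1) = 0, s))"

lemma nu_section_Qt:
  assumes "a \<in> Qs sc"
  shows "nu_section a \<in> Qt sc"
proof -
  obtain f s where a: "a = (f, s)" by (cases a)
  have f: "f \<in> dual sc" and "s * (1 - s) \<in> range f" using assms by (auto simp: a Qs_def)
  then obtain p where "f p = s * (1 - s)" by (metis rangeE)
  then have ex: "\<exists>p. f p + s * (s - 1) = 0" by (intro exI[of _ p]) (simp add: algebra_simps)
  show ?thesis unfolding a nu_section_def Qt_def using someI_ex[OF ex] f by simp
qed

lemma nu_nu_section [simp]: "nu (nu_section a) = a"
  by (cases a) (simp add: nu_section_def nu_def)

lemma nu_section_nu:
  assumes x: "x \<in> Qt sc"
  shows "(nu_section (nu x), x) \<in> Qt_rel sc"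
proof -
  obtain f p s where xx: "x = (f, p, s)" by (cases x)
  have Q: "(f, s) \<in> Qs sc" using nu_Qs[OF x] by (simp add: xx nu_def)
  obtain p' where "nu_section (f, s) = (f, p', s)" by (simp add: nu_section_def)
  then show ?thesis using Qt_rel_change_point[of f p' s sc p] nu_section_Qt[OF Q] x xx
    by (simp add: nu_def)
qed

lemma nu_spec: "spec_Qs t (nu H) = nu (spec_Qt sc t H)"
  by (cases H) (simp add: nu_def spec_Qs_def spec_Qt_def)

lemma nu_section_edge:
  assumes H: "H \<in> Qs (pscale sc)" and m: "module sc"
  shows "(nu_section (spec_Qs 0 H), nu_section (spec_Qs 1 H)) \<in> Qt_rel sc"
proof -
  define H' where "H' = nu_section H"
  have H': "H' \<in> Qt (pscale sc)" unfolding H'_def by (rule nu_section_Qt[OF H])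
  have nH: "nu H' = H" unfolding H'_def by simp
  have e: "(nu_section (spec_Qs t H), spec_Qt sc t H') \<in> Qt_rel sc" for t
    using nu_section_nu[OF spec_Qt_Qt[OF H' m, of t]] nu_spec[of t H' sc] nH by simp
  show ?thesis
    using Qt_rel_trans[OF Qt_rel_trans[OF e[of 0] Qt_rel_edge[OF H' m]] Qt_rel_sym[OF e[of 1]]] .
qed

definition kappa_inv :: "('r::comm_ring_1 \<Rightarrow> 'm \<Rightarrow> 'm) \<Rightarrow> 'r \<Rightarrow> ('m \<Rightarrow> 'r) \<times> 'm \<times> 'r \<Rightarrow> ('m \<Rightarrow> 'r) \<times> 'm \<times> 'r" where
  "kappa_inv sc h = (\<lambda>(f, p, z). (\<lambda>q. h * f q, sc h p, h * (z + 1)))"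

lemma scaled_dual: "f \<in> dual sc \<Longrightarrow> (\<lambda>q. c * f q) \<in> dual sc"
  by (rule dualI[OF dual_module]) (auto simp: dual_add dual_scale algebra_simps)

lemma kappa_Qt':
  assumes x: "x \<in> Qt sc"
  shows "kappa sc x \<in> Qt' sc"
proof -
  obtain f p s where xx: "x = (f, p, s)" by (cases x)
  have f: "f \<in> dual sc" and e: "f p + s * (s - 1) = 0" using x xx by (auto simp: Qt_def)
  have "2 * f (sc 2 p) + (2 * s - 1)\<^sup>2 = 4 * (f p + s * (s - 1)) + 1"
    by (simp add: dual_scale[OF f] power2_eq_square algebra_simps)
  then show ?thesis using e scaled_dual[OF f] by (simp add: xx kappa_def Qt'_def)
qed

lemma kappa_inv_Qt:
  assumes x: "x \<in> Qt' sc" and h: "2 * h = 1"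
  shows "kappa_inv sc h x \<in> Qt sc"
proof -
  obtain f p z where xx: "x = (f, p, z)" by (cases x)
  have f: "f \<in> dual sc" and e: "f p + z\<^sup>2 = 1" using x xx by (auto simp: Qt'_def)
  have "h * f (sc h p) + h * (z + 1) * (h * (z + 1) - 1) = h * h * (f p + z\<^sup>2 - 1) + h * (z + 1) * (2 * h - 1)"
    by (simp add: dual_scale[OF f] power2_eq_square algebra_simps)
  also have "\<dots> = 0" using e h by simp
  finally show ?thesis using scaled_dual[OF f] by (simp add: xx kappa_inv_def Qt_def)
qed

lemma kappa_inv_kappa:
  assumes m: "module sc" and h: "2 * h = 1"
  shows "kappa_inv sc h (kappa sc x) = x"
proof -
  obtain f p s where xx: "x = (f, p, s)" by (cases x)
  have hh: "h * 2 = 1" using h by (simp add: mult.commute)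
  have "h * (2 * s - 1 + 1) = s" using hh by (simp add: mult.assoc[symmetric])
  moreover have "(\<lambda>q. h * (2 * f q)) = f" using hh by (simp add: mult.assoc[symmetric])
  ultimately show ?thesis
    by (simp add: xx kappa_inv_def kappa_def module.scale_scale[OF m] hh module.scale_one[OF m])
qed

lemma kappa_kappa_inv:
  assumes m: "module sc" and h: "2 * h = 1"
  shows "kappa sc (kappa_inv sc h x) = x"
proof -
  obtain f p z where xx: "x = (f, p, z)" by (cases x)
  have "2 * (h * (z + 1)) - 1 = z" using h by (simp add: mult.assoc[symmetric])
  moreover have "(\<lambda>q. 2 * (h * f q)) = f" using h by (simp add: mult.assoc[symmetric])
  ultimately show ?thesis
    by (simp add: xx kappa_inv_def kappa_def module.scale_scale[OF m] h module.scale_one[OF m])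
qed

lemma peval_pscale_const:
  assumes m: "module sc"
  shows "peval sc t (pscale sc [:c:] P) = sc c (peval sc t P)"
proof -
  have d: "degree (pscale sc [:c:] P) \<le> degree P"
    by (rule degree_le) (simp add: coeff_pscale_const[OF m] coeff_eq_0 module.scale_zero_right[OF m])
  have "peval sc t (pscale sc [:c:] P) = (\<Sum>j\<le>degree P. sc (t ^ j) (sc c (coeff P j)))"
    by (simp add: peval_le[OF m d] coeff_pscale_const[OF m])
  also have "\<dots> = (\<Sum>j\<le>degree P. sc c (sc (t ^ j) (coeff P j)))"
    by (simp add: module.scale_scale[OF m] mult.commute)
  also have "\<dots> = sc c (peval sc t P)" by (simp add: peval_def module.scale_sum_right[OF m])
  finally show ?thesis .
qed

lemma kappa_spec: assumes m: "module sc"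
  shows "spec_Qt sc t (kappa (pscale sc) H) = kappa sc (spec_Qt sc t H)"
proof -
  obtain F P S where HH: "H = (F, P, S)" by (cases H)
  have "pscale sc 2 P = pscale sc [:2:] P" by (simp only: numeral_poly[symmetric])
  then show ?thesis by (simp add: HH kappa_def spec_Qt_def spec_dual_def peval_pscale_const[OF m])
qed

lemma kappa_inv_spec: assumes m: "module sc"
  shows "spec_Qt sc t (kappa_inv (pscale sc) [:h:] H) = kappa_inv sc h (spec_Qt sc t H)"
proof -
  obtain F P S where HH: "H = (F, P, S)" by (cases H)
  show ?thesis by (simp add: HH kappa_inv_def spec_Qt_def spec_dual_def peval_pscale_const[OF m])
qed

section \<open>The obstruction class map\<close>

definition chi_rep :: "('a::comm_ring_1 \<Rightarrow> 'b::ab_group_add \<Rightarrow> 'b) \<Rightarrow> 'a set \<times> ('b \<Rightarrow> 'a set) \<Rightarrow> ('b \<Rightarrow> 'a) \<times> 'a" where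
  "chi_rep sc x = (SOME a. chi_wit sc x a)"

context
  fixes sc :: "'a::comm_ring_1 \<Rightarrow> 'b::ab_group_add \<Rightarrow> 'b"
  assumes N: "noetherian_ring TYPE('a)" and P: "projective_module sc"
begin

lemma chi_wit_chi_rep: "x \<in> LO sc \<Longrightarrow> chi_wit sc x (chi_rep sc x)"
  unfolding chi_rep_def using chi_wit_exists[OF N P] by (rule someI_ex)

lemma chi_rep_Qs: "x \<in> LO sc \<Longrightarrow> chi_rep sc x \<in> Qs sc"
  by (rule chi_wit_Qs[OF chi_wit_chi_rep])

lemma compat_chi_rep: "compat (LO_rel sc) (Qs_rel sc) (chi_rep sc)"
  unfolding LO_rel_def
proof (rule htpy_compat[OF equiv_Qs_rel chi_rep_Qs])
  fix H assume H: "H \<in> LO (pscale sc)" and e: "spec_LO 0 H \<in> LO sc" "spec_LO 1 H \<in> LO sc"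
  obtain W where W: "chi_wit (pscale sc) H W"
    using chi_wit_exists[OF noetherian_ring_poly[OF N] projective_module_pscale[OF P] H] by blast
  have "(chi_rep sc (spec_LO t H), spec_Qs t W) \<in> Qs_rel sc" if "spec_LO t H \<in> LO sc" for t
    using chi_wit_Qs_rel[OF N that chi_wit_chi_rep[OF that]
        chi_wit_spec[OF projective_module_module[OF P] W]] .
  then show "(chi_rep sc (spec_LO 0 H), chi_rep sc (spec_LO 1 H)) \<in> Qs_rel sc"
    using Qs_rel_edge[OF chi_wit_Qs[OF W] projective_module_module[OF P]] e
    by (blast intro: Qs_rel_trans Qs_rel_sym)
qed

lemma chi_wit_LO_rel:
  assumes xy: "(x, y) \<in> LO_rel sc" and a: "chi_wit sc x a" and b: "chi_wit sc y b"
  shows "(a, b) \<in> Qs_rel sc"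
proof -
  have L: "x \<in> LO sc" "y \<in> LO sc"
    using xy equiv_LO_rel unfolding equiv_def refl_on_def by blast+
  have "(a, chi_rep sc x) \<in> Qs_rel sc" "(chi_rep sc x, chi_rep sc y) \<in> Qs_rel sc"
    "(chi_rep sc y, b) \<in> Qs_rel sc"
    using chi_wit_Qs_rel[OF N L(1) a chi_wit_chi_rep[OF L(1)]] compat_chi_rep xy
      chi_wit_Qs_rel[OF N L(2) chi_wit_chi_rep[OF L(2)] b]
    unfolding compat_def by blast+
  then show ?thesis by (blast intro: Qs_rel_trans)
qed

lemma chibar_eq_class:
  assumes D: "D \<in> pi0_LO sc" and x: "x \<in> D" and a: "chi_wit sc x a"
  shows "chibar sc D = Qs_rel sc `` {a}"
proof
  have "(x, y) \<in> LO_rel sc" if "y \<in> D" for y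
    using D x that unfolding pi0_LO_def by (metis equiv_LO_rel quotient_eq_iff)
  then show "chibar sc D \<subseteq> Qs_rel sc `` {a}"
    unfolding chibar_def using chi_wit_LO_rel[OF _ a] equiv_Qs_rel
    by (blast intro: Qs_rel_trans)
  show "Qs_rel sc `` {a} \<subseteq> chibar sc D"
    unfolding chibar_def using x a by blast
qed

lemma chibar_eq_induced:
  assumes D: "D \<in> pi0_LO sc"
  shows "chibar sc D = induced (Qs_rel sc) (chi_rep sc) D"
proof -
  obtain x where x: "x \<in> LO sc" "D = LO_rel sc `` {x}"
    using D unfolding pi0_LO_def by (auto elim: quotientE)
  have "x \<in> D" using equiv_class_self[OF equiv_LO_rel x(1)] x(2) by simp
  then show ?thesis
    using chibar_eq_class[OF D _ chi_wit_chi_rep[OF x(1)]]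
      induced_class[OF equiv_LO_rel equiv_Qs_rel compat_chi_rep x(1)] x(2)
    by simp
qed

lemma eta'_chi_rep: "x \<in> LO sc \<Longrightarrow> (eta' (chi_rep sc x), x) \<in> LO_rel sc"
  by (simp add: eta'_chi_wit chi_wit_chi_rep LO_rel_def htpy_refl)

lemma chi_rep_eta': "a \<in> Qs sc \<Longrightarrow> (chi_rep sc (eta' a), a) \<in> Qs_rel sc"
  using chi_wit_Qs_rel[OF N eta'_LO chi_wit_chi_rep[OF eta'_LO] chi_wit_eta'] .

lemma bij_betw_chibar: "bij_betw (chibar sc) (pi0_LO sc) (pi0_Qs sc)"
proof -
  have "bij_betw (induced (Qs_rel sc) (chi_rep sc)) (pi0_LO sc) (pi0_Qs sc)"
    unfolding pi0_LO_def pi0_Qs_def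
    by (rule induced_bij[OF equiv_LO_rel equiv_Qs_rel compat_chi_rep chi_rep_Qs
          compat_eta'[OF projective_module_module[OF P]] eta'_LO eta'_chi_rep chi_rep_eta'])
  then show ?thesis using chibar_eq_induced by (simp cong: bij_betw_cong)
qed

lemma bij_betw_induced_eta': "bij_betw (induced (LO_rel sc) eta') (pi0_Qs sc) (pi0_LO sc)"
  unfolding pi0_LO_def pi0_Qs_def
  by (rule induced_bij[OF equiv_Qs_rel equiv_LO_rel compat_eta'[OF projective_module_module[OF P]]
        eta'_LO compat_chi_rep chi_rep_Qs chi_rep_eta' eta'_chi_rep])

lemma chibar_induced_eta': "C \<in> pi0_Qs sc \<Longrightarrow> chibar sc (induced (LO_rel sc) eta' C) = C"
  unfolding pi0_Qs_def
  using compat_eta'[OF projective_module_module[OF P]]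
  by (simp add: chibar_eq_induced[unfolded pi0_LO_def]
      induced_in_quotient[OF equiv_Qs_rel equiv_LO_rel _ eta'_LO]
      induced_inverse[OF equiv_Qs_rel equiv_LO_rel _ eta'_LO compat_chi_rep chi_rep_eta'])

lemma induced_eta'_chibar: "D \<in> pi0_LO sc \<Longrightarrow> induced (LO_rel sc) eta' (chibar sc D) = D"
  unfolding pi0_LO_def
  by (simp add: chibar_eq_induced[unfolded pi0_LO_def]
      induced_inverse[OF equiv_LO_rel equiv_Qs_rel compat_chi_rep chi_rep_Qs
        compat_eta'[OF projective_module_module[OF P]] eta'_chi_rep])

end

lemma compat_nu:
  assumes m: "module sc"
  shows "compat (Qt_rel sc) (Qs_rel sc) nu"
  unfolding Qt_rel_def
proof (rule htpy_compat[OF equiv_Qs_rel nu_Qs])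
  fix H assume "H \<in> Qt (pscale sc)"
  then show "(nu (spec_Qt sc 0 H), nu (spec_Qt sc 1 H)) \<in> Qs_rel sc"
    using Qs_rel_edge[OF nu_Qs m] by (simp add: nu_spec[symmetric])
qed

lemma compat_nu_section:
  assumes m: "module sc"
  shows "compat (Qs_rel sc) (Qt_rel sc) nu_section"
  unfolding Qs_rel_def
proof (rule htpy_compat[OF equiv_Qt_rel nu_section_Qt])
  fix H assume "H \<in> Qs (pscale sc)"
  then show "(nu_section (spec_Qs 0 H), nu_section (spec_Qs 1 H)) \<in> Qt_rel sc"
    by (rule nu_section_edge[OF _ m])
qed

lemma bij_betw_induced_nu:
  assumes m: "module sc"
  shows "bij_betw (induced (Qs_rel sc) nu) (pi0_Qt sc) (pi0_Qs sc)"
  unfolding pi0_Qt_def pi0_Qs_def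
  by (rule induced_bij[OF equiv_Qt_rel equiv_Qs_rel compat_nu[OF m] nu_Qs compat_nu_section[OF m]
        nu_section_Qt nu_section_nu])
    (simp_all add: Qs_rel_def htpy_refl)

lemma eta_eq_comp: "eta = (\<lambda>x. eta' (nu x))"
  by (simp add: fun_eq_iff eta_def)

lemma compat_eta:
  assumes m: "module sc"
  shows "compat (Qt_rel sc) (LO_rel sc) eta"
  unfolding eta_eq_comp by (rule compat_comp[OF compat_nu[OF m] compat_eta'[OF m]])

lemma bij_betw_induced_eta:
  fixes sc :: "'a::comm_ring_1 \<Rightarrow> 'b::ab_group_add \<Rightarrow> 'b"
  assumes N: "noetherian_ring TYPE('a)" and P: "projective_module sc"
  shows "bij_betw (induced (LO_rel sc) eta) (pi0_Qt sc) (pi0_LO sc)"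
proof -
  note m = projective_module_module[OF P]
  have "induced (LO_rel sc) eta C = induced (LO_rel sc) eta' (induced (Qs_rel sc) nu C)"
    if C: "C \<in> pi0_Qt sc" for C
    unfolding eta_eq_comp
    by (rule induced_comp[OF equiv_Qt_rel equiv_Qs_rel equiv_LO_rel compat_nu[OF m] nu_Qs compat_eta'[OF m]
          C[unfolded pi0_Qt_def]])
  then show ?thesis
    using bij_betw_trans[OF bij_betw_induced_nu[OF m] bij_betw_induced_eta'[OF N P]]
    by (simp add: comp_def cong: bij_betw_cong)
qed

lemma compat_kappa:
  assumes m: "module sc"
  shows "compat (Qt_rel sc) (Qt'_rel sc) (kappa sc)"
  unfolding Qt_rel_def
proof (rule htpy_compat[OF equiv_Qt'_rel kappa_Qt'])
  fix H assume H: "H \<in> Qt (pscale sc)" and e: "spec_Qt sc 0 H \<in> Qt sc" "spec_Qt sc 1 H \<in> Qt sc"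
  have "(spec_Qt sc 0 (kappa (pscale sc) H), spec_Qt sc 1 (kappa (pscale sc) H)) \<in> Qt'_rel sc"
    by (rule Qt'_rel_edge[OF kappa_Qt'[OF H]]) (simp_all add: kappa_spec[OF m] kappa_Qt' e)
  then show "(kappa sc (spec_Qt sc 0 H), kappa sc (spec_Qt sc 1 H)) \<in> Qt'_rel sc"
    by (simp add: kappa_spec[OF m])
qed

lemma compat_kappa_inv:
  fixes sc :: "'a::comm_ring_1 \<Rightarrow> 'b::ab_group_add \<Rightarrow> 'b" and h :: 'a
  assumes m: "module sc" and h: "2 * h = 1"
  shows "compat (Qt'_rel sc) (Qt_rel sc) (kappa_inv sc h)"
  unfolding Qt'_rel_def
proof (rule htpy_compat[OF equiv_Qt_rel kappa_inv_Qt[OF _ h]])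
  fix H assume H: "H \<in> Qt' (pscale sc)"
  have "2 * [:h:] = (1 :: 'a poly)"
  proof -
    have "(2::'a poly) * [:h:] = [:h:] + [:h:]" by (rule mult_2)
    also have "\<dots> = [:h + h:]" by (simp only: add_pCons add_0_left)
    also have "h + h = 1" using h by (simp only: mult_2)
    finally show ?thesis by (simp only: one_pCons)
  qed
  then have "kappa_inv (pscale sc) [:h:] H \<in> Qt (pscale sc)"
    by (rule kappa_inv_Qt[OF H])
  from Qt_rel_edge[OF this m]
  show "(kappa_inv sc h (spec_Qt sc 0 H), kappa_inv sc h (spec_Qt sc 1 H)) \<in> Qt_rel sc"
    by (simp add: kappa_inv_spec[OF m])
qed

lemma bij_betw_induced_kappa:
  fixes sc :: "'a::comm_ring_1 \<Rightarrow> 'b::ab_group_add \<Rightarrow> 'b" and h :: 'a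
  assumes m: "module sc" and h: "2 * h = 1"
  shows "bij_betw (induced (Qt'_rel sc) (kappa sc)) (pi0_Qt sc) (pi0_Qt' sc)"
  unfolding pi0_Qt_def pi0_Qt'_def
  by (rule induced_bij[OF equiv_Qt_rel equiv_Qt'_rel compat_kappa[OF m] kappa_Qt' compat_kappa_inv[OF m h]
        kappa_inv_Qt[OF _ h]])
    (simp_all add: kappa_inv_kappa[OF m h] kappa_kappa_inv[OF m h] Qt_rel_def Qt'_rel_def htpy_refl)

theorem lemma2p8:
  fixes scale :: "'a::comm_ring_1 \<Rightarrow> 'b::ab_group_add \<Rightarrow> 'b"
  assumes "noetherian_ring TYPE('a)"
    and "contains_field_with_half TYPE('a)"
    and "module scale"
    and "projective_module scale"
  shows
    "(\<forall>x\<in>LO scale. \<exists>a. chi_wit scale x a)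
     \<and> (\<forall>x y a b. (x, y) \<in> LO_rel scale \<longrightarrow> chi_wit scale x a \<longrightarrow> chi_wit scale y b
           \<longrightarrow> (a, b) \<in> Qs_rel scale)
     \<and> (\<forall>D\<in>pi0_LO scale. \<forall>x\<in>D. \<forall>a. chi_wit scale x a \<longrightarrow> chibar scale D = Qs_rel scale `` {a})
     \<and> bij_betw (chibar scale) (pi0_LO scale) (pi0_Qs scale)
     \<and> compat (Qs_rel scale) (LO_rel scale) eta'
     \<and> (\<forall>C\<in>pi0_Qs scale. chibar scale (induced (LO_rel scale) eta' C) = C)
     \<and> (\<forall>D\<in>pi0_LO scale. induced (LO_rel scale) eta' (chibar scale D) = D)
     \<and> compat (Qt_rel scale) (LO_rel scale) eta
     \<and> compat (Qt_rel scale) (Qs_rel scale) nu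
     \<and> compat (Qt_rel scale) (Qt'_rel scale) (kappa scale)
     \<and> bij_betw (induced (LO_rel scale) eta) (pi0_Qt scale) (pi0_LO scale)
     \<and> bij_betw (induced (LO_rel scale) eta') (pi0_Qs scale) (pi0_LO scale)
     \<and> bij_betw (induced (Qs_rel scale) nu) (pi0_Qt scale) (pi0_Qs scale)
     \<and> bij_betw (induced (Qt'_rel scale) (kappa scale)) (pi0_Qt scale) (pi0_Qt' scale)"
proof -
  note N = assms(1) and m = assms(3) and P = assms(4)
  obtain h :: 'a where h: "2 * h = 1"
    using assms(2) unfolding contains_field_with_half_def by blast
  show ?thesis
    using chi_wit_exists[OF N P] chi_wit_LO_rel[OF N P] chibar_eq_class[OF N P] bij_betw_chibar[OF N P]
      compat_eta'[OF m] chibar_induced_eta'[OF N P] induced_eta'_chibar[OF N P] compat_eta[OF m]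
      compat_nu[OF m] compat_kappa[OF m] bij_betw_induced_eta[OF N P] bij_betw_induced_eta'[OF N P]
      bij_betw_induced_nu[OF m] bij_betw_induced_kappa[OF m h]
    by blast
qed

end
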